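(* Let $G$ be a locally finite connected graph and $\overline{T}$ a spanning topological caterpillar of $G$. Let $v,w\in V(G)$ with $V_v\le_T V_w$. Then for any two vertices $x,y$ with $V_v<_T V_x<_T V_w$ and $V_v<_T V_y<_T V_w$ there exists a finite $x$–$y$ path in the induced subgraph $G[I_{vw}]$, where $I_{vw}=\bigcup\{V_u : V_v\le_T V_u\le_T V_w\}$.
   Context: All graphs are simple. For a locally finite connected graph $G$, $|G|$ is the Freudenthal compactification (the 1-complex $G$ plus its ends, i.e. classes of rays not separable by finitely many vertices, with the standard topology). An arc is a homeomorphic image of $[0,1]$ in $|G|$, a circle one of $S^1$; $\overline{F}$ is the closure in $|G|$ of a subgraph $F$. A topological caterpillar is a circle-free arc-connected closure $\overline{T}$ of a forest $T\subseteq G$ such that $\overline{T-L}$ is an arc $A$, where $L$ is the set of vertices of degree $1$ in $T$; it is spanning if $V(T)=V(G)$. The arc $A$ induces a linear order $<_A$ on $V(T)\setminus L$. For $<_A$-consecutive $v'<_A w'$ in $V(T)\setminus L$ put $P_{w'}=\{w'\}\cup(N_T(v')\cap L)$; if $<_A$ has a maximum $m$ put $P^+=N_T(m)\cap L$; if it has a minimum $s$ put $P^-=\{s\}$. These sets form a partition $\mathcal{P}_T$ of $V(T)$, and $V_u$ denotes the class containing $u$. The linear order $<_T$ on $\mathcal{P}_T$ is given by $V_{v'}<_T V_{w'}$ whenever $v',w'\in V(T)\setminus L$ with $v'<_A w'$, together with $P^-<_T P<_T P^+$ for all other classes $P$. *)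

theory Defs
  imports "HOL-Analysis.Analysis"
begin

definition simple_graph :: "'a set \<Rightarrow> ('a \<Rightarrow> 'a \<Rightarrow> bool) \<Rightarrow> bool" where
  "simple_graph V E \<longleftrightarrow> (\<forall>x y. E x y \<longrightarrow> E y x \<and> x \<noteq> y \<and> x \<in> V \<and> y \<in> V)"

definition nbhd :: "('a \<Rightarrow> 'a \<Rightarrow> bool) \<Rightarrow> 'a \<Rightarrow> 'a set" where
  "nbhd E v = {u. E v u}"

definition locally_finite :: "'a set \<Rightarrow> ('a \<Rightarrow> 'a \<Rightarrow> bool) \<Rightarrow> bool" where
  "locally_finite V E \<longleftrightarrow> (\<forall>v\<in>V. finite (nbhd E v))"

definition is_path :: "('a \<Rightarrow> 'a \<Rightarrow> bool) \<Rightarrow> 'a list \<Rightarrow> bool" where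
  "is_path E p \<longleftrightarrow> p \<noteq> [] \<and> distinct p \<and> (\<forall>i. Suc i < length p \<longrightarrow> E (p ! i) (p ! Suc i))"

definition path_in :: "('a \<Rightarrow> 'a \<Rightarrow> bool) \<Rightarrow> 'a set \<Rightarrow> 'a \<Rightarrow> 'a \<Rightarrow> bool" where
  "path_in E W x y \<longleftrightarrow> (\<exists>p. is_path E p \<and> hd p = x \<and> last p = y \<and> set p \<subseteq> W)"

definition connected_graph :: "'a set \<Rightarrow> ('a \<Rightarrow> 'a \<Rightarrow> bool) \<Rightarrow> bool" where
  "connected_graph V E \<longleftrightarrow> V \<noteq> {} \<and> (\<forall>x\<in>V. \<forall>y\<in>V. path_in E V x y)"

definition has_cycle :: "('a \<Rightarrow> 'a \<Rightarrow> bool) \<Rightarrow> bool" where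
  "has_cycle E \<longleftrightarrow> (\<exists>p. is_path E p \<and> length p \<ge> 3 \<and> E (last p) (hd p))"

definition subgraph :: "'a set \<Rightarrow> ('a \<Rightarrow> 'a \<Rightarrow> bool) \<Rightarrow> 'a set \<Rightarrow> ('a \<Rightarrow> 'a \<Rightarrow> bool) \<Rightarrow> bool" where
  "subgraph VF EF V E \<longleftrightarrow> simple_graph VF EF \<and> VF \<subseteq> V \<and> (\<forall>x y. EF x y \<longrightarrow> E x y)"

definition forest_in :: "'a set \<Rightarrow> ('a \<Rightarrow> 'a \<Rightarrow> bool) \<Rightarrow> 'a set \<Rightarrow> ('a \<Rightarrow> 'a \<Rightarrow> bool) \<Rightarrow> bool" where
  "forest_in VT ET V E \<longleftrightarrow> subgraph VT ET V E \<and> \<not> has_cycle ET"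

definition is_ray :: "'a set \<Rightarrow> ('a \<Rightarrow> 'a \<Rightarrow> bool) \<Rightarrow> (nat \<Rightarrow> 'a) \<Rightarrow> bool" where
  "is_ray V E r \<longleftrightarrow> inj r \<and> (\<forall>i. r i \<in> V \<and> E (r i) (r (Suc i)))"

definition conn_avoid :: "'a set \<Rightarrow> ('a \<Rightarrow> 'a \<Rightarrow> bool) \<Rightarrow> 'a set \<Rightarrow> 'a \<Rightarrow> 'a \<Rightarrow> bool" where
  "conn_avoid V E S a b \<longleftrightarrow> path_in E (V - S) a b"

definition ray_equiv :: "'a set \<Rightarrow> ('a \<Rightarrow> 'a \<Rightarrow> bool) \<Rightarrow> (nat \<Rightarrow> 'a) \<Rightarrow> (nat \<Rightarrow> 'a) \<Rightarrow> bool" where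
  "ray_equiv V E r r' \<longleftrightarrow> (\<forall>S. finite S \<longrightarrow>
      (\<exists>n. \<forall>i\<ge>n. \<forall>j\<ge>n. conn_avoid V E S (r i) (r' j)))"

definition ends :: "'a set \<Rightarrow> ('a \<Rightarrow> 'a \<Rightarrow> bool) \<Rightarrow> (nat \<Rightarrow> 'a) set set" where
  "ends V E = {{r'. is_ray V E r' \<and> ray_equiv V E r r'} | r. is_ray V E r}"

text \<open>C(S,\<omega>): the component of G - S in which the end \<omega> lives.\<close>
definition end_comp :: "'a set \<Rightarrow> ('a \<Rightarrow> 'a \<Rightarrow> bool) \<Rightarrow> 'a set \<Rightarrow> (nat \<Rightarrow> 'a) set \<Rightarrow> 'a set" where
  "end_comp V E S \<omega> = {x \<in> V - S. \<exists>r\<in>\<omega>. \<exists>n. \<forall>i\<ge>n. conn_avoid V E S (r i) x}"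

text \<open>Points of the 1-complex G are represented by barycentric coordinates:
a vertex v is the indicator of v, an inner point of the edge uv is the function
taking value t at u and 1-t at v (0<t<1). Points of |G| are such functions (Inl)
or ends (Inr).\<close>

definition vpt :: "'a \<Rightarrow> ('a \<Rightarrow> real)" where
  "vpt v = (\<lambda>x. if x = v then 1 else 0)"

definition ept :: "'a \<Rightarrow> 'a \<Rightarrow> real \<Rightarrow> ('a \<Rightarrow> real)" where
  "ept u v t = (\<lambda>x. if x = u then t else if x = v then 1 - t else 0)"

definition vertex_pts :: "'a set \<Rightarrow> ('a \<Rightarrow> real) set" where
  "vertex_pts W = vpt ` W"

definition inner_edge_pts :: "('a \<Rightarrow> 'a \<Rightarrow> bool) \<Rightarrow> ('a \<Rightarrow> real) set" where
  "inner_edge_pts F = {ept u v t | u v t. F u v \<and> 0 < t \<and> t < 1}"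

definition complex_pts :: "'a set \<Rightarrow> ('a \<Rightarrow> 'a \<Rightarrow> bool) \<Rightarrow> ('a \<Rightarrow> real) set" where
  "complex_pts V E = vertex_pts V \<union> inner_edge_pts E"

type_synonym 'a fpoint = "('a \<Rightarrow> real) + (nat \<Rightarrow> 'a) set"

definition supp :: "('a \<Rightarrow> real) \<Rightarrow> 'a set" where
  "supp g = {x. g x \<noteq> 0}"

text \<open>Basic open sets in the 1-complex (locally finite: the sup-distance topology
agrees with the 1-complex topology).\<close>
definition complex_basis :: "'a set \<Rightarrow> ('a \<Rightarrow> 'a \<Rightarrow> bool) \<Rightarrow> 'a fpoint set set" where
  "complex_basis V E = {Inl ` {g \<in> complex_pts V E. \<forall>x. \<bar>f x - g x\<bar> < \<epsilon>} | f \<epsilon>.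
       f \<in> complex_pts V E \<and> \<epsilon> > 0}"

text \<open>Basic open sets around ends: the set C-hat(S,omega) = C(S,\<omega>) together with its ends and
the inner points of edges of G with an endvertex in C(S,\<omega>) (these have their
other endvertex in C(S,\<omega>) or in S).\<close>
definition end_basis :: "'a set \<Rightarrow> ('a \<Rightarrow> 'a \<Rightarrow> bool) \<Rightarrow> 'a fpoint set set" where
  "end_basis V E = {Inl ` {g \<in> complex_pts V E. supp g \<subseteq> C \<union> S \<and> supp g \<inter> C \<noteq> {}}
        \<union> Inr ` {\<omega>' \<in> ends V E. end_comp V E S \<omega>' = C} | S \<omega> C.
       finite S \<and> S \<subseteq> V \<and> \<omega> \<in> ends V E \<and> C = end_comp V E S \<omega>}"

definition Freudenthal :: "'a set \<Rightarrow> ('a \<Rightarrow> 'a \<Rightarrow> bool) \<Rightarrow> 'a fpoint topology" where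
  "Freudenthal V E = topology_generated_by (complex_basis V E \<union> end_basis V E)"

definition subgraph_pts :: "'a set \<Rightarrow> ('a \<Rightarrow> 'a \<Rightarrow> bool) \<Rightarrow> 'a fpoint set" where
  "subgraph_pts VF EF = Inl ` (vertex_pts VF \<union> inner_edge_pts EF)"

definition gclosure :: "'a set \<Rightarrow> ('a \<Rightarrow> 'a \<Rightarrow> bool) \<Rightarrow> 'a set \<Rightarrow> ('a \<Rightarrow> 'a \<Rightarrow> bool) \<Rightarrow> 'a fpoint set" where
  "gclosure V E VF EF = Freudenthal V E closure_of subgraph_pts VF EF"

definition arc_param :: "'b topology \<Rightarrow> 'b set \<Rightarrow> (real \<Rightarrow> 'b) \<Rightarrow> bool" where
  "arc_param X A h \<longleftrightarrow> homeomorphic_map (top_of_set {0..1}) (subtopology X A) h"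

definition is_circle :: "'b topology \<Rightarrow> 'b set \<Rightarrow> bool" where
  "is_circle X C \<longleftrightarrow> C \<subseteq> topspace X \<and>
     (top_of_set (sphere (0::complex) 1)) homeomorphic_space (subtopology X C)"

definition circle_free :: "'b topology \<Rightarrow> 'b set \<Rightarrow> bool" where
  "circle_free X Y \<longleftrightarrow> \<not> (\<exists>C \<subseteq> Y. is_circle X C)"

definition arc_connected_set :: "'b topology \<Rightarrow> 'b set \<Rightarrow> bool" where
  "arc_connected_set X Y \<longleftrightarrow> (\<forall>a\<in>Y. \<forall>b\<in>Y. a \<noteq> b \<longrightarrow>
     (\<exists>A h. A \<subseteq> Y \<and> arc_param X A h \<and> h 0 = a \<and> h 1 = b))"

definition leaves :: "'a set \<Rightarrow> ('a \<Rightarrow> 'a \<Rightarrow> bool) \<Rightarrow> 'a set" where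
  "leaves VT ET = {v \<in> VT. card (nbhd ET v) = 1}"

definition spine_V :: "'a set \<Rightarrow> ('a \<Rightarrow> 'a \<Rightarrow> bool) \<Rightarrow> 'a set" where
  "spine_V VT ET = VT - leaves VT ET"

definition spine_E :: "'a set \<Rightarrow> ('a \<Rightarrow> 'a \<Rightarrow> bool) \<Rightarrow> ('a \<Rightarrow> 'a \<Rightarrow> bool)" where
  "spine_E VT ET = (\<lambda>x y. ET x y \<and> x \<notin> leaves VT ET \<and> y \<notin> leaves VT ET)"

text \<open>\<open>top_caterpillar V E VT ET h\<close>: the closure of the forest T=(VT,ET) is a
topological caterpillar of G and h parametrises the arc A = closure of T - L.\<close>
definition top_caterpillar ::
  "'a set \<Rightarrow> ('a \<Rightarrow> 'a \<Rightarrow> bool) \<Rightarrow> 'a set \<Rightarrow> ('a \<Rightarrow> 'a \<Rightarrow> bool) \<Rightarrow> (real \<Rightarrow> 'a fpoint) \<Rightarrow> bool" where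
  "top_caterpillar V E VT ET h \<longleftrightarrow> forest_in VT ET V E
     \<and> circle_free (Freudenthal V E) (gclosure V E VT ET)
     \<and> arc_connected_set (Freudenthal V E) (gclosure V E VT ET)
     \<and> arc_param (Freudenthal V E) (gclosure V E (spine_V VT ET) (spine_E VT ET)) h"

definition arc_pos :: "(real \<Rightarrow> 'a fpoint) \<Rightarrow> 'a \<Rightarrow> real" where
  "arc_pos h u = inv_into {0..1} h (Inl (vpt u))"

definition lessA :: "'a set \<Rightarrow> ('a \<Rightarrow> 'a \<Rightarrow> bool) \<Rightarrow> (real \<Rightarrow> 'a fpoint) \<Rightarrow> 'a \<Rightarrow> 'a \<Rightarrow> bool" where
  "lessA VT ET h u u' \<longleftrightarrow> u \<in> spine_V VT ET \<and> u' \<in> spine_V VT ET \<and> arc_pos h u < arc_pos h u'"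

definition consecA :: "'a set \<Rightarrow> ('a \<Rightarrow> 'a \<Rightarrow> bool) \<Rightarrow> (real \<Rightarrow> 'a fpoint) \<Rightarrow> 'a \<Rightarrow> 'a \<Rightarrow> bool" where
  "consecA VT ET h v' w' \<longleftrightarrow> lessA VT ET h v' w' \<and> \<not> (\<exists>u. lessA VT ET h v' u \<and> lessA VT ET h u w')"

definition maxA :: "'a set \<Rightarrow> ('a \<Rightarrow> 'a \<Rightarrow> bool) \<Rightarrow> (real \<Rightarrow> 'a fpoint) \<Rightarrow> 'a \<Rightarrow> bool" where
  "maxA VT ET h m \<longleftrightarrow> m \<in> spine_V VT ET \<and> \<not> (\<exists>u. lessA VT ET h m u)"

definition minA :: "'a set \<Rightarrow> ('a \<Rightarrow> 'a \<Rightarrow> bool) \<Rightarrow> (real \<Rightarrow> 'a fpoint) \<Rightarrow> 'a \<Rightarrow> bool" where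
  "minA VT ET h s \<longleftrightarrow> s \<in> spine_V VT ET \<and> \<not> (\<exists>u. lessA VT ET h u s)"

definition partT :: "'a set \<Rightarrow> ('a \<Rightarrow> 'a \<Rightarrow> bool) \<Rightarrow> (real \<Rightarrow> 'a fpoint) \<Rightarrow> 'a set set" where
  "partT VT ET h =
     {insert w' (nbhd ET v' \<inter> leaves VT ET) | v' w'. consecA VT ET h v' w'}
   \<union> {nbhd ET m \<inter> leaves VT ET | m. maxA VT ET h m}
   \<union> {{s} | s. minA VT ET h s}"

definition clsT :: "'a set \<Rightarrow> ('a \<Rightarrow> 'a \<Rightarrow> bool) \<Rightarrow> (real \<Rightarrow> 'a fpoint) \<Rightarrow> 'a \<Rightarrow> 'a set" where
  "clsT VT ET h u = (THE P. P \<in> partT VT ET h \<and> u \<in> P)"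

definition lessT :: "'a set \<Rightarrow> ('a \<Rightarrow> 'a \<Rightarrow> bool) \<Rightarrow> (real \<Rightarrow> 'a fpoint) \<Rightarrow> 'a set \<Rightarrow> 'a set \<Rightarrow> bool" where
  "lessT VT ET h P Q \<longleftrightarrow>
     (\<exists>v' w'. lessA VT ET h v' w' \<and> P = clsT VT ET h v' \<and> Q = clsT VT ET h w')
   \<or> (\<exists>s. minA VT ET h s \<and> P = {s} \<and> Q \<in> partT VT ET h \<and> Q \<noteq> P)
   \<or> (\<exists>m. maxA VT ET h m \<and> Q = nbhd ET m \<inter> leaves VT ET \<and> P \<in> partT VT ET h \<and> P \<noteq> Q)"

definition leT :: "'a set \<Rightarrow> ('a \<Rightarrow> 'a \<Rightarrow> bool) \<Rightarrow> (real \<Rightarrow> 'a fpoint) \<Rightarrow> 'a set \<Rightarrow> 'a set \<Rightarrow> bool" where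
  "leT VT ET h P Q \<longleftrightarrow> lessT VT ET h P Q \<or> P = Q"

definition interval_I :: "'a set \<Rightarrow> ('a \<Rightarrow> 'a \<Rightarrow> bool) \<Rightarrow> (real \<Rightarrow> 'a fpoint) \<Rightarrow> 'a \<Rightarrow> 'a \<Rightarrow> 'a set" where
  "interval_I VT ET h v w = \<Union> {clsT VT ET h u | u. u \<in> VT \<and>
       leT VT ET h (clsT VT ET h v) (clsT VT ET h u) \<and> leT VT ET h (clsT VT ET h u) (clsT VT ET h w)}"

end

theory Submission
  imports Defs
begin

(* Let K be the set of vertices reachable from x by a path in G[I_vw]. Follow the arc
   A = closure of T - L from the spine vertex carrying x to the one carrying y, a leaf being carried
   by its unique neighbour on the spine. A point of this segment is either a vertex or an inner point
   of an edge of T - L, whose vertices lie in I_vw and hence all or none in K, or an end \<omega>; near \<omega>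
   some component C(S, \<omega>) lies inside I_vw and, being connected, is contained in K or disjoint
   from it. So "the point meets K" is locally constant along the segment, hence constant, and y is
   reached. *)

section \<open>Paths in induced subgraphs\<close>

definition induced_adj :: "('a \<Rightarrow> 'a \<Rightarrow> bool) \<Rightarrow> 'a set \<Rightarrow> 'a \<Rightarrow> 'a \<Rightarrow> bool" where
  "induced_adj E W u v \<longleftrightarrow> E u v \<and> u \<in> W \<and> v \<in> W"

lemma is_path_take:
  assumes "is_path E p" "k < length p"
  shows "is_path E (take (Suc k) p)"
  using assms unfolding is_path_def by auto

lemma is_path_snoc:
  assumes "is_path E p" "c \<notin> set p" "E (last p) c"
  shows "is_path E (p @ [c])"
  unfolding is_path_def
proof (intro conjI allI impI)
  show "distinct (p @ [c])" using assms(1,2) unfolding is_path_def by simp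
  fix i assume i: "Suc i < length (p @ [c])"
  show "E ((p @ [c]) ! i) ((p @ [c]) ! Suc i)"
  proof (cases "Suc i < length p")
    case True
    then show ?thesis using assms(1) unfolding is_path_def by (simp add: nth_append)
  next
    case False
    with i have "i = length p - 1" "p \<noteq> []" by auto
    with assms(3) show ?thesis by (simp add: nth_append last_conv_nth)
  qed
qed simp

lemma rtranclp_induced_adj_if_path:
  assumes "is_path E p" "set p \<subseteq> W"
  shows "(induced_adj E W)\<^sup>*\<^sup>* (hd p) (last p)"
proof -
  have "(induced_adj E W)\<^sup>*\<^sup>* (hd p) (p ! i)" if "i < length p" for i
    using that
  proof (induction i)
    case 0
    then show ?case by (simp add: hd_conv_nth)
  next
    case (Suc i)
    then have "induced_adj E W (p ! i) (p ! Suc i)"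
      using assms unfolding induced_adj_def is_path_def by (auto dest: nth_mem)
    with Suc show ?case by (simp add: rtranclp.rtrancl_into_rtrancl)
  qed
  moreover have "p \<noteq> []" using assms(1) unfolding is_path_def by simp
  ultimately show ?thesis by (simp add: last_conv_nth)
qed

lemma path_in_if_rtranclp:
  assumes "(induced_adj E W)\<^sup>*\<^sup>* a b" "a \<in> W"
  shows "path_in E W a b"
  using assms
proof (induction rule: rtranclp_induct)
  case base
  show ?case unfolding path_in_def is_path_def by (intro exI[of _ "[a]"]) (simp add: base)
next
  case (step b c)
  then obtain p where p: "is_path E p" "hd p = a" "last p = b" "set p \<subseteq> W"
    unfolding path_in_def by auto
  have bc: "E b c" "c \<in> W" using step(2) unfolding induced_adj_def by auto
  have "p \<noteq> []" using p(1) unfolding is_path_def by simp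
  show ?case
  proof (cases "c \<in> set p")
    case True
    then obtain k where k: "k < length p" "p ! k = c" by (meson in_set_conv_nth)
    have "hd (take (Suc k) p) = a" using p(2) by (simp add: hd_take)
    moreover have "last (take (Suc k) p) = c" using k by (simp add: take_Suc_conv_app_nth)
    moreover have "set (take (Suc k) p) \<subseteq> W" using p(4) by (meson order_trans set_take_subset)
    ultimately show ?thesis unfolding path_in_def using is_path_take[OF p(1) k(1)] by blast
  next
    case False
    then have "is_path E (p @ [c])" using is_path_snoc p(1,3) bc(1) by metis
    then show ?thesis unfolding path_in_def using p \<open>p \<noteq> []\<close> bc(2)
      by (intro exI[of _ "p @ [c]"]) auto
  qed
qed

lemma path_in_iff_rtranclp: "path_in E W a b \<longleftrightarrow> a \<in> W \<and> (induced_adj E W)\<^sup>*\<^sup>* a b"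
proof
  assume "path_in E W a b"
  then obtain p where p: "is_path E p" "hd p = a" "last p = b" "set p \<subseteq> W"
    unfolding path_in_def by auto
  then have "a \<in> W" unfolding is_path_def by auto
  moreover have "(induced_adj E W)\<^sup>*\<^sup>* a b" using rtranclp_induced_adj_if_path[OF p(1,4)] p(2,3) by simp
  ultimately show "a \<in> W \<and> (induced_adj E W)\<^sup>*\<^sup>* a b" by simp
qed (auto intro: path_in_if_rtranclp)

lemma rtranclp_induced_adj_in: "(induced_adj E W)\<^sup>*\<^sup>* a b \<Longrightarrow> a \<in> W \<Longrightarrow> b \<in> W"
  by (induction rule: rtranclp_induct) (auto simp: induced_adj_def)

lemma path_in_refl: "a \<in> W \<Longrightarrow> path_in E W a a"
  unfolding path_in_iff_rtranclp by simp

lemma path_in_trans: "path_in E W a b \<Longrightarrow> path_in E W b c \<Longrightarrow> path_in E W a c"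
  unfolding path_in_iff_rtranclp using rtranclp_trans by metis

lemma path_in_snoc:
  assumes "path_in E W a b" "E b c" "c \<in> W"
  shows "path_in E W a c"
proof -
  have "a \<in> W" "(induced_adj E W)\<^sup>*\<^sup>* a b" using assms(1) unfolding path_in_iff_rtranclp by auto
  moreover have "b \<in> W" using rtranclp_induced_adj_in calculation by metis
  then have "induced_adj E W b c" using assms(2,3) by (simp add: induced_adj_def)
  ultimately show ?thesis
    unfolding path_in_iff_rtranclp by (meson rtranclp.rtrancl_into_rtrancl)
qed

lemma path_in_edge: "E a b \<Longrightarrow> a \<in> W \<Longrightarrow> b \<in> W \<Longrightarrow> path_in E W a b"
  using path_in_snoc[of E W a a b] path_in_refl[of a W E] by blast

lemma path_in_sym:
  assumes "\<And>u v. E u v \<Longrightarrow> E v u" "path_in E W a b"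
  shows "path_in E W b a"
proof -
  have "symp (induced_adj E W)" using assms(1) unfolding symp_def induced_adj_def by blast
  moreover have "(induced_adj E W)\<^sup>*\<^sup>* a b" "a \<in> W"
    using assms(2) unfolding path_in_iff_rtranclp by auto
  ultimately have "(induced_adj E W)\<^sup>*\<^sup>* b a" "b \<in> W"
    using sympD[OF symp_rtranclp] rtranclp_induced_adj_in by metis+
  then show ?thesis by (rule path_in_if_rtranclp)
qed

lemma path_in_mono: "path_in E W a b \<Longrightarrow> W \<subseteq> W' \<Longrightarrow> path_in E W' a b"
  unfolding path_in_def by blast

section \<open>Ends\<close>

locale sgraph =
  fixes V :: "'a set" and E :: "'a \<Rightarrow> 'a \<Rightarrow> bool"
  assumes simple: "simple_graph V E"
begin

lemma edge_sym: "E x y \<Longrightarrow> E y x" using simple unfolding simple_graph_def by blast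
lemma edge_vertices: "E x y \<Longrightarrow> x \<in> V \<and> y \<in> V" using simple unfolding simple_graph_def by blast
lemma edge_neq: "E x y \<Longrightarrow> x \<noteq> y" using simple unfolding simple_graph_def by blast

lemma ray_eventually_avoids:
  assumes "is_ray V E r" "finite S"
  obtains n where "\<forall>i\<ge>n. r i \<notin> S"
proof -
  have "finite (r -` S)" using assms unfolding is_ray_def by (simp add: finite_vimageI)
  then obtain n where "\<forall>i\<in>r -` S. i < n" using finite_nat_set_iff_bounded by blast
  then have "\<forall>i\<ge>n. r i \<notin> S" by (meson leD vimageI)
  then show ?thesis by (rule that)
qed

lemma ray_tail_conn_avoid:
  assumes "is_ray V E r" "\<forall>i\<ge>n. r i \<notin> S" "n \<le> i" "n \<le> j"
  shows "conn_avoid V E S (r i) (r j)"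
proof -
  have from_n: "path_in E (V - S) (r n) (r (n + k))" for k
  proof (induction k)
    case 0
    show ?case using assms(1,2) path_in_refl[of "r n" "V - S" E] unfolding is_ray_def by simp
  next
    case (Suc k)
    have "E (r (n + k)) (r (n + Suc k))" "r (n + Suc k) \<in> V - S"
      using assms(1,2) unfolding is_ray_def by auto
    with Suc.IH show ?case by (rule path_in_snoc)
  qed
  have "path_in E (V - S) (r i) (r n)"
    using path_in_sym[OF edge_sym from_n[of "i - n"]] assms(3) by simp
  moreover have "path_in E (V - S) (r n) (r j)" using from_n[of "j - n"] assms(4) by simp
  ultimately show ?thesis unfolding conn_avoid_def by (rule path_in_trans)
qed

lemma endsE:
  assumes "\<omega> \<in> ends V E"
  obtains r where "is_ray V E r" "\<omega> = {r'. is_ray V E r' \<and> ray_equiv V E r r'}"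
  using assms unfolding ends_def by auto

lemma ray_equiv_refl:
  assumes "is_ray V E r" shows "ray_equiv V E r r"
  unfolding ray_equiv_def
proof (intro allI impI)
  fix S :: "'a set" assume "finite S"
  then obtain n where "\<forall>i\<ge>n. r i \<notin> S" using ray_eventually_avoids assms by blast
  then show "\<exists>n. \<forall>i\<ge>n. \<forall>j\<ge>n. conn_avoid V E S (r i) (r j)"
    using ray_tail_conn_avoid[OF assms] by blast
qed

lemma end_comp_subset: "end_comp V E S \<omega> \<subseteq> V - S"
  unfolding end_comp_def by auto

lemma end_comp_nonempty:
  assumes "\<omega> \<in> ends V E" "finite S"
  shows "end_comp V E S \<omega> \<noteq> {}"
proof -
  obtain r where r: "is_ray V E r" "\<omega> = {r'. is_ray V E r' \<and> ray_equiv V E r r'}"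
    using endsE assms(1) by blast
  then have "r \<in> \<omega>" using ray_equiv_refl by auto
  obtain n where n: "\<forall>i\<ge>n. r i \<notin> S" using ray_eventually_avoids r(1) assms(2) by blast
  have "r n \<in> V - S" using r(1) n unfolding is_ray_def by blast
  then have "r n \<in> end_comp V E S \<omega>"
    unfolding end_comp_def using ray_tail_conn_avoid[OF r(1) n] \<open>r \<in> \<omega>\<close> by blast
  then show ?thesis by auto
qed

lemma end_comp_adj_closed:
  assumes "c \<in> end_comp V E S \<omega>" "E c d" "d \<notin> S"
  shows "d \<in> end_comp V E S \<omega>"
proof -
  have d: "d \<in> V - S" using assms edge_vertices by auto
  obtain r n where r: "r \<in> \<omega>" "\<forall>i\<ge>n. path_in E (V - S) (r i) c"
    using assms(1) unfolding end_comp_def conn_avoid_def by auto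
  then have "\<forall>i\<ge>n. conn_avoid V E S (r i) d"
    unfolding conn_avoid_def using path_in_snoc[of E "V - S" _ c d] assms(2) d by simp
  then show ?thesis unfolding end_comp_def using d r(1) by auto
qed

lemma end_comp_antimono:
  assumes "S \<subseteq> S'"
  shows "end_comp V E S' \<omega> \<subseteq> end_comp V E S \<omega>"
proof
  fix x assume "x \<in> end_comp V E S' \<omega>"
  then obtain r n where "x \<in> V - S'" "r \<in> \<omega>" "\<forall>i\<ge>n. path_in E (V - S') (r i) x"
    unfolding end_comp_def conn_avoid_def by auto
  moreover have "V - S' \<subseteq> V - S" using assms by auto
  ultimately have "x \<in> V - S" "\<forall>i\<ge>n. path_in E (V - S) (r i) x"
    using path_in_mono[of E "V - S'" _ x "V - S"] by auto
  then show "x \<in> end_comp V E S \<omega>" unfolding end_comp_def conn_avoid_def using \<open>r \<in> \<omega>\<close> by auto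
qed

lemma end_comp_conn_avoid:
  assumes "\<omega> \<in> ends V E" "finite S" "c \<in> end_comp V E S \<omega>" "d \<in> end_comp V E S \<omega>"
  shows "conn_avoid V E S c d"
proof -
  obtain r0 where r0: "\<omega> = {r'. is_ray V E r' \<and> ray_equiv V E r0 r'}"
    using endsE assms(1) by blast
  obtain r1 n1 where r1: "r1 \<in> \<omega>" "\<forall>i\<ge>n1. conn_avoid V E S (r1 i) c"
    using assms(3) unfolding end_comp_def by auto
  obtain r2 n2 where r2: "r2 \<in> \<omega>" "\<forall>i\<ge>n2. conn_avoid V E S (r2 i) d"
    using assms(4) unfolding end_comp_def by auto
  obtain m1 where m1: "\<forall>i\<ge>m1. \<forall>j\<ge>m1. conn_avoid V E S (r0 i) (r1 j)"
    using r1(1) r0 assms(2) unfolding ray_equiv_def by auto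
  obtain m2 where m2: "\<forall>i\<ge>m2. \<forall>j\<ge>m2. conn_avoid V E S (r0 i) (r2 j)"
    using r2(1) r0 assms(2) unfolding ray_equiv_def by auto
  define N where "N = max (max n1 n2) (max m1 m2)"
  have 1: "path_in E (V - S) c (r1 N)"
    using path_in_sym[of E "V - S" "r1 N" c, OF edge_sym] r1(2) unfolding N_def conn_avoid_def by simp
  have 2: "path_in E (V - S) (r1 N) (r0 N)"
    using path_in_sym[of E "V - S" "r0 N" "r1 N", OF edge_sym] m1 unfolding N_def conn_avoid_def by simp
  have 3: "path_in E (V - S) (r0 N) (r2 N)" "path_in E (V - S) (r2 N) d"
    using m2 r2(2) unfolding N_def conn_avoid_def by simp_all
  show ?thesis
    unfolding conn_avoid_def using path_in_trans[OF path_in_trans[OF path_in_trans[OF 1 2] 3(1)] 3(2)] .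
qed

lemma end_comp_eqI:
  assumes "\<omega>1 \<in> ends V E" "\<omega>2 \<in> ends V E" "finite S"
    "z \<in> end_comp V E S \<omega>1" "z \<in> end_comp V E S \<omega>2"
  shows "end_comp V E S \<omega>1 = end_comp V E S \<omega>2"
proof -
  have "end_comp V E S a \<subseteq> end_comp V E S b"
    if a: "a \<in> ends V E" and za: "z \<in> end_comp V E S a" and zb: "z \<in> end_comp V E S b" for a b
  proof
    fix y assume y: "y \<in> end_comp V E S a"
    have zy: "path_in E (V - S) z y"
      using end_comp_conn_avoid[OF a assms(3) za y] unfolding conn_avoid_def .
    obtain r n where r: "r \<in> b" "\<forall>i\<ge>n. path_in E (V - S) (r i) z"
      using zb unfolding end_comp_def conn_avoid_def by auto
    then have "\<forall>i\<ge>n. conn_avoid V E S (r i) y"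
      unfolding conn_avoid_def using path_in_trans[OF _ zy] by simp
    then show "y \<in> end_comp V E S b" using y r(1) unfolding end_comp_def by auto
  qed
  then show ?thesis using assms by blast
qed

lemma path_in_end_comp:
  assumes "\<omega> \<in> ends V E" "finite S" "c \<in> end_comp V E S \<omega>" "d \<in> end_comp V E S \<omega>"
  shows "path_in E (end_comp V E S \<omega>) c d"
proof -
  have "(induced_adj E (V - S))\<^sup>*\<^sup>* c d"
    using end_comp_conn_avoid[OF assms] unfolding conn_avoid_def path_in_iff_rtranclp by simp
  then have "(induced_adj E (end_comp V E S \<omega>))\<^sup>*\<^sup>* c d"
  proof (induction rule: rtranclp_induct)
    case (step m n)
    have "m \<in> end_comp V E S \<omega>"
      using rtranclp_induced_adj_in[OF step.IH assms(3)] .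
    moreover have "E m n" "n \<notin> S" using step(2) unfolding induced_adj_def by auto
    ultimately have "induced_adj E (end_comp V E S \<omega>) m n"
      unfolding induced_adj_def using end_comp_adj_closed by blast
    with step.IH show ?case by (rule rtranclp.rtrancl_into_rtrancl)
  qed simp
  then show ?thesis using assms(3) path_in_if_rtranclp by metis
qed

end

section \<open>Basic open sets of the Freudenthal compactification\<close>

definition complex_ball :: "'a set \<Rightarrow> ('a \<Rightarrow> 'a \<Rightarrow> bool) \<Rightarrow> ('a \<Rightarrow> real) \<Rightarrow> real \<Rightarrow> 'a fpoint set" where
  "complex_ball V E f e = Inl ` {g \<in> complex_pts V E. \<forall>x. \<bar>f x - g x\<bar> < e}"

definition basic_end_nbhd :: "'a set \<Rightarrow> ('a \<Rightarrow> 'a \<Rightarrow> bool) \<Rightarrow> 'a set \<Rightarrow> (nat \<Rightarrow> 'a) set \<Rightarrow> 'a fpoint set" where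
  "basic_end_nbhd V E S \<omega> =
     Inl ` {g \<in> complex_pts V E. supp g \<subseteq> end_comp V E S \<omega> \<union> S \<and> supp g \<inter> end_comp V E S \<omega> \<noteq> {}}
   \<union> Inr ` {\<omega>' \<in> ends V E. end_comp V E S \<omega>' = end_comp V E S \<omega>}"

definition supported_pts :: "'a set \<Rightarrow> ('a \<Rightarrow> 'a \<Rightarrow> bool) \<Rightarrow> 'a set \<Rightarrow> 'a fpoint set" where
  "supported_pts V E F = Inl ` {g \<in> complex_pts V E. supp g \<subseteq> F}"

definition open_edge :: "'a \<Rightarrow> 'a \<Rightarrow> 'a fpoint set" where
  "open_edge u z = Inl ` {ept u z t | t. 0 < t \<and> t < 1}"

lemma supp_vpt [simp]: "supp (vpt u) = {u}"
  unfolding supp_def vpt_def by auto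

lemma supp_ept: "u \<noteq> z \<Longrightarrow> 0 < s \<Longrightarrow> s < 1 \<Longrightarrow> supp (ept u z s) = {u, z}"
  unfolding supp_def ept_def by auto

lemma ept_swap: "u \<noteq> z \<Longrightarrow> ept u z s = ept z u (1 - s)"
  unfolding ept_def by (rule ext) auto

lemma ept_at_first: "u \<noteq> z \<Longrightarrow> ept u z t u = t"
  unfolding ept_def by simp

lemma ept_at_second: "u \<noteq> z \<Longrightarrow> ept u z t z = 1 - t"
  unfolding ept_def by simp

lemma vpt_ne_ept: "u \<noteq> z \<Longrightarrow> 0 < s \<Longrightarrow> s < 1 \<Longrightarrow> vpt w \<noteq> ept u z s"
proof
  assume "u \<noteq> z" "0 < s" "s < 1" "vpt w = ept u z s"
  then have "supp (vpt w) = {u, z}" using supp_ept by metis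
  then show False using \<open>u \<noteq> z\<close> by simp
qed

lemma vpt_eq_iff [simp]: "vpt u = vpt w \<longleftrightarrow> u = w"
proof
  assume "vpt u = vpt w"
  then have "supp (vpt u) = supp (vpt w)" by (rule arg_cong)
  then show "u = w" by simp
qed simp

lemma supp_if_complex_ball:
  assumes "Inl g \<in> complex_ball V E f e" "e \<le> \<bar>f w\<bar>"
  shows "w \<in> supp g"
proof -
  have "\<bar>f w - g w\<bar> < e" using assms(1) unfolding complex_ball_def by auto
  then show ?thesis using assms(2) unfolding supp_def by auto
qed

lemma complex_ball_complex_pts: "Inl g \<in> complex_ball V E f e \<Longrightarrow> g \<in> complex_pts V E"
  unfolding complex_ball_def by auto

context sgraph
begin

abbreviation "X \<equiv> Freudenthal V E"

lemma complex_pts_cases: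
  assumes "g \<in> complex_pts V E"
  obtains (vert) u where "u \<in> V" "g = vpt u"
  | (edge) u z s where "E u z" "0 < s" "s < 1" "g = ept u z s"
  using assms unfolding complex_pts_def vertex_pts_def inner_edge_pts_def by auto

lemma vpt_in_complex_pts: "u \<in> V \<Longrightarrow> vpt u \<in> complex_pts V E"
  unfolding complex_pts_def vertex_pts_def by blast

lemma ept_in_complex_pts: "E u z \<Longrightarrow> 0 < s \<Longrightarrow> s < 1 \<Longrightarrow> ept u z s \<in> complex_pts V E"
  unfolding complex_pts_def inner_edge_pts_def by blast

lemma openin_complex_ball: "f \<in> complex_pts V E \<Longrightarrow> e > 0 \<Longrightarrow> openin X (complex_ball V E f e)"
  unfolding Freudenthal_def complex_ball_def
  by (rule topology_generated_by_Basis) (auto simp: complex_basis_def)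

lemma center_in_complex_ball: "f \<in> complex_pts V E \<Longrightarrow> e > 0 \<Longrightarrow> Inl f \<in> complex_ball V E f e"
  unfolding complex_ball_def by auto

lemma openin_basic_end_nbhd:
  assumes "finite S" "S \<subseteq> V" "\<omega> \<in> ends V E"
  shows "openin X (basic_end_nbhd V E S \<omega>)"
  unfolding Freudenthal_def
proof (rule topology_generated_by_Basis)
  show "basic_end_nbhd V E S \<omega> \<in> complex_basis V E \<union> end_basis V E"
    unfolding end_basis_def basic_end_nbhd_def using assms by blast
qed

lemma Inr_in_basic_end_nbhd: "\<omega> \<in> ends V E \<Longrightarrow> Inr \<omega> \<in> basic_end_nbhd V E S \<omega>"
  unfolding basic_end_nbhd_def by auto

lemma topspace_FreudenthalE:
  assumes "p \<in> topspace X"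
  obtains (inl) g where "g \<in> complex_pts V E" "p = Inl g"
  | (inr) \<omega> where "\<omega> \<in> ends V E" "p = Inr \<omega>"
  using assms unfolding Freudenthal_def complex_basis_def end_basis_def by auto

lemma Inl_in_topspace: "g \<in> complex_pts V E \<Longrightarrow> Inl g \<in> topspace X"
  using openin_complex_ball[of g 1] center_in_complex_ball[of g 1] openin_subset by fastforce

lemma supp_subset_end_comp_antimono:
  assumes "S \<subseteq> S'" "g \<in> complex_pts V E" "supp g \<subseteq> end_comp V E S' \<omega> \<union> S'"
    and a: "a \<in> supp g" "a \<in> end_comp V E S' \<omega>"
  shows "supp g \<subseteq> end_comp V E S \<omega> \<union> S"
proof
  have CC: "end_comp V E S' \<omega> \<subseteq> end_comp V E S \<omega>" using end_comp_antimono[OF assms(1)] .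
  fix b assume b: "b \<in> supp g"
  show "b \<in> end_comp V E S \<omega> \<union> S"
  proof (cases "b \<in> end_comp V E S' \<omega> \<or> b \<in> S")
    case True then show ?thesis using CC by blast
  next
    case False
    with a b have "a \<noteq> b" by blast
    from assms(2) show ?thesis
    proof (cases rule: complex_pts_cases)
      case (vert u)
      then show ?thesis using a b \<open>a \<noteq> b\<close> by simp
    next
      case (edge u z s)
      then have "supp g = {u, z}" using supp_ept edge_neq by metis
      then have "E a b" using a(1) b \<open>a \<noteq> b\<close> edge(1) edge_sym by auto
      then have "b \<in> end_comp V E S \<omega>" using end_comp_adj_closed CC a(2) False by blast
      then show ?thesis by simp
    qed
  qed
qed

lemma basic_end_nbhd_antimono:
  assumes "\<omega> \<in> ends V E" "finite S'" "S \<subseteq> S'"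
  shows "basic_end_nbhd V E S' \<omega> \<subseteq> basic_end_nbhd V E S \<omega>"
proof
  let ?C = "end_comp V E S \<omega>" and ?C' = "end_comp V E S' \<omega>"
  have CC: "?C' \<subseteq> ?C" using end_comp_antimono[OF assms(3)] .
  fix p assume "p \<in> basic_end_nbhd V E S' \<omega>"
  then consider (inl) g where "p = Inl g" "g \<in> complex_pts V E" "supp g \<subseteq> ?C' \<union> S'" "supp g \<inter> ?C' \<noteq> {}"
    | (inr) \<omega>' where "p = Inr \<omega>'" "\<omega>' \<in> ends V E" "end_comp V E S' \<omega>' = ?C'"
    unfolding basic_end_nbhd_def by blast
  then show "p \<in> basic_end_nbhd V E S \<omega>"
  proof cases
    case inl
    then obtain a where "a \<in> supp g" "a \<in> ?C'" by blast
    with inl have "supp g \<subseteq> ?C \<union> S" "supp g \<inter> ?C \<noteq> {}"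
      using supp_subset_end_comp_antimono[OF assms(3)] CC by blast+
    then show ?thesis unfolding basic_end_nbhd_def using inl(1,2) by blast
  next
    case inr
    obtain c where c: "c \<in> ?C'" using end_comp_nonempty[OF assms(1,2)] by blast
    then have "c \<in> end_comp V E S \<omega>'" "c \<in> ?C"
      using inr(3) CC end_comp_antimono[OF assms(3), of \<omega>'] by auto
    then have "end_comp V E S \<omega>' = ?C"
      using end_comp_eqI[OF inr(2) assms(1)] finite_subset[OF assms(3,2)] by blast
    then show ?thesis unfolding basic_end_nbhd_def using inr(1,2) by blast
  qed
qed

lemma basic_end_nbhd_in_generated_open:
  assumes "generate_topology_on (complex_basis V E \<union> end_basis V E) U" "Inr \<omega> \<in> U" "\<omega> \<in> ends V E"
  shows "\<exists>S. finite S \<and> S \<subseteq> V \<and> basic_end_nbhd V E S \<omega> \<subseteq> U"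
  using assms
proof (induction arbitrary: \<omega> rule: generate_topology_on.induct)
  case (Int a b)
  then obtain S1 S2 where S: "finite S1" "S1 \<subseteq> V" "basic_end_nbhd V E S1 \<omega> \<subseteq> a"
    "finite S2" "S2 \<subseteq> V" "basic_end_nbhd V E S2 \<omega> \<subseteq> b"
    by (meson IntD1 IntD2)
  then have "basic_end_nbhd V E (S1 \<union> S2) \<omega> \<subseteq> a \<inter> b"
    using basic_end_nbhd_antimono[OF Int.prems(2), of "S1 \<union> S2"] by blast
  then show ?case using S by (meson finite_UnI le_sup_iff)
next
  case (UN K)
  then obtain k where "k \<in> K" "Inr \<omega> \<in> k" by blast
  with UN.IH UN.prems(2) show ?case by (meson Union_upper order_trans)
next
  case (Basis s)
  then have "s \<in> end_basis V E" unfolding complex_basis_def by auto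
  then obtain S \<omega>0 where S: "finite S" "S \<subseteq> V" "\<omega>0 \<in> ends V E" "s = basic_end_nbhd V E S \<omega>0"
    unfolding end_basis_def basic_end_nbhd_def by blast
  moreover have "end_comp V E S \<omega> = end_comp V E S \<omega>0"
    using Basis.prems(1) S(4) unfolding basic_end_nbhd_def by auto
  ultimately have "basic_end_nbhd V E S \<omega> = s" unfolding basic_end_nbhd_def by simp
  then show ?case using S by blast
qed simp

lemma end_has_basic_nbhd:
  assumes "openin X U" "Inr \<omega> \<in> U"
  obtains S where "finite S" "S \<subseteq> V" "basic_end_nbhd V E S \<omega> \<subseteq> U"
proof -
  have "Inr \<omega> \<in> topspace X" using assms openin_subset by blast
  then have "\<omega> \<in> ends V E" by (cases rule: topspace_FreudenthalE) auto
  then show ?thesis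
    using basic_end_nbhd_in_generated_open[OF openin_topology_generated_by[OF assms(1)[unfolded Freudenthal_def]]]
      assms(2) that by blast
qed

lemma complex_ball_disjoint_supported_pts:
  assumes "w \<in> supp g" "w \<notin> F"
  shows "complex_ball V E g \<bar>g w\<bar> \<inter> supported_pts V E F = {}"
proof -
  have "w \<in> supp g'" if "Inl g' \<in> complex_ball V E g \<bar>g w\<bar>" for g'
    using supp_if_complex_ball[OF that] by simp
  then show ?thesis using assms(2) unfolding supported_pts_def by blast
qed

lemma basic_end_nbhd_disjoint_supported_pts:
  "basic_end_nbhd V E F \<omega> \<inter> supported_pts V E F = {}"
  using end_comp_subset unfolding basic_end_nbhd_def supported_pts_def by blast

lemma closedin_supported_pts:
  assumes "finite F" "F \<subseteq> V"
  shows "closedin X (supported_pts V E F)"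
  unfolding closedin_def
proof
  show "supported_pts V E F \<subseteq> topspace X" unfolding supported_pts_def using Inl_in_topspace by blast
  show "openin X (topspace X - supported_pts V E F)"
  proof (subst openin_subopen, intro ballI)
    fix p assume p: "p \<in> topspace X - supported_pts V E F"
    then have "p \<in> topspace X" by blast
    then show "\<exists>T. openin X T \<and> p \<in> T \<and> T \<subseteq> topspace X - supported_pts V E F"
    proof (cases rule: topspace_FreudenthalE)
      case (inl g)
      then obtain w where w: "w \<in> supp g" "w \<notin> F" using p unfolding supported_pts_def by blast
      then have gw: "\<bar>g w\<bar> > 0" unfolding supp_def by simp
      let ?T = "complex_ball V E g \<bar>g w\<bar>"
      have "openin X ?T" "p \<in> ?T"
        using openin_complex_ball[OF inl(1) gw] center_in_complex_ball[OF inl(1) gw] inl(2) by simp_all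
      moreover have "?T \<subseteq> topspace X - supported_pts V E F"
        using openin_subset[OF \<open>openin X ?T\<close>] complex_ball_disjoint_supported_pts[OF w] by blast
      ultimately show ?thesis by blast
    next
      case (inr \<omega>)
      let ?T = "basic_end_nbhd V E F \<omega>"
      have "openin X ?T" "p \<in> ?T"
        using openin_basic_end_nbhd[OF assms inr(1)] Inr_in_basic_end_nbhd[OF inr(1)] inr(2) by simp_all
      moreover have "?T \<subseteq> topspace X - supported_pts V E F"
        using openin_subset[OF \<open>openin X ?T\<close>] basic_end_nbhd_disjoint_supported_pts by blast
      ultimately show ?thesis by blast
    qed
  qed
qed

lemma Inl_ept_in_open_edge:
  assumes "E c d" "0 < s" "s < 1" "{c, d} = {u, z}"
  shows "Inl (ept c d s) \<in> open_edge u z"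
proof -
  have cd: "c \<noteq> d" using edge_neq assms(1) by blast
  show ?thesis
  proof (cases "c = u")
    case True
    then have "d = z" using assms(4) cd by (metis doubleton_eq_iff)
    then show ?thesis unfolding open_edge_def using True assms by blast
  next
    case False
    then have "c = z" "d = u" using assms(4) by (metis doubleton_eq_iff)+
    then have "ept c d s = ept u z (1 - s)" using ept_swap cd by metis
    moreover have "0 < 1 - s" "1 - s < 1" using assms by simp_all
    ultimately show ?thesis unfolding open_edge_def by blast
  qed
qed

lemma openin_open_edge:
  assumes "E u z"
  shows "openin X (open_edge u z)"
proof (subst openin_subopen, intro ballI)
  have uz: "u \<noteq> z" using edge_neq assms by blast
  fix p assume "p \<in> open_edge u z"
  then obtain t where t: "p = Inl (ept u z t)" "0 < t" "t < 1" unfolding open_edge_def by blast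
  let ?f = "ept u z t" let ?e = "min t (1 - t)"
  have fc: "?f \<in> complex_pts V E" using ept_in_complex_pts assms t by blast
  have e: "?e > 0" using t by simp
  let ?T = "complex_ball V E ?f ?e"
  have "openin X ?T" using openin_complex_ball fc e by blast
  moreover have "p \<in> ?T" using center_in_complex_ball fc e t by simp
  moreover have "?T \<subseteq> open_edge u z"
  proof
    fix q assume q: "q \<in> ?T"
    then obtain g where g: "q = Inl g" unfolding complex_ball_def by blast
    have gc: "g \<in> complex_pts V E" using q g complex_ball_complex_pts by blast
    have su: "u \<in> supp g" using supp_if_complex_ball[of g V E ?f ?e u] q g ept_at_first[OF uz] t by simp
    have sz: "z \<in> supp g" using supp_if_complex_ball[of g V E ?f ?e z] q g ept_at_second[OF uz] t by simp
    from gc show "q \<in> open_edge u z"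
    proof (cases rule: complex_pts_cases)
      case (vert w)
      then show ?thesis using su sz uz by simp
    next
      case (edge c d s)
      have "supp g = {c, d}" using edge supp_ept edge_neq by metis
      then have "{c, d} = {u, z}" using su sz uz edge_neq[OF edge(1)] by auto
      then show ?thesis using Inl_ept_in_open_edge edge g by blast
    qed
  qed
  ultimately show "\<exists>T. openin X T \<and> p \<in> T \<and> T \<subseteq> open_edge u z" by blast
qed

lemma open_edge_subset_supported_pts:
  assumes "E u z" shows "open_edge u z \<subseteq> supported_pts V E {u, z}"
proof
  fix p assume "p \<in> open_edge u z"
  then obtain t where t: "p = Inl (ept u z t)" "0 < t" "t < 1" unfolding open_edge_def by blast
  have "ept u z t \<in> complex_pts V E" using ept_in_complex_pts assms t by blast
  moreover have "supp (ept u z t) = {u, z}" using supp_ept edge_neq assms t by metis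
  ultimately show "p \<in> supported_pts V E {u, z}" unfolding supported_pts_def using t by blast
qed

lemma supported_pts_edge_cases:
  assumes "E u z" "p \<in> supported_pts V E {u, z}" "p \<notin> open_edge u z"
  shows "p = Inl (vpt u) \<or> p = Inl (vpt z)"
proof -
  obtain g where g: "p = Inl g" "g \<in> complex_pts V E" "supp g \<subseteq> {u, z}"
    using assms(2) unfolding supported_pts_def by blast
  from g(2) show ?thesis
  proof (cases rule: complex_pts_cases)
    case (vert w)
    then show ?thesis using g by auto
  next
    case (edge c d s)
    have cd: "c \<noteq> d" using edge_neq edge(1) by blast
    have "supp g = {c, d}" using edge supp_ept cd by metis
    then have "{c, d} = {u, z}" using g(3) cd by auto
    then have "p \<in> open_edge u z" using Inl_ept_in_open_edge edge g(1) by blast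
    then show ?thesis using assms(3) by blast
  qed
qed

lemma Inl_vpt_notin_open_edge: "Inl (vpt w) \<notin> open_edge u z" if "u \<noteq> z"
  unfolding open_edge_def using vpt_ne_ept[OF that] by blast

lemma gclosure_meets_complex_ball:
  assumes g: "Inl g \<in> gclosure V E VF EF" and e: "e > 0"
  obtains g' where "g' \<in> vertex_pts VF \<union> inner_edge_pts EF" "Inl g' \<in> complex_ball V E g e"
proof -
  have "Inl g \<in> topspace X" using g closure_of_subset_topspace[of X "subgraph_pts VF EF"]
    unfolding gclosure_def by blast
  then have gc: "g \<in> complex_pts V E" by (cases rule: topspace_FreudenthalE) auto
  have "\<exists>y\<in>subgraph_pts VF EF. y \<in> complex_ball V E g e"
    using g openin_complex_ball[OF gc e] center_in_complex_ball[OF gc e]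
    unfolding gclosure_def closure_of_def by blast
  then show ?thesis using that unfolding subgraph_pts_def by blast
qed

lemma Inl_in_gclosure_cases:
  assumes VF: "VF \<subseteq> V" and EF: "\<And>a b. EF a b \<Longrightarrow> E a b \<and> a \<in> VF \<and> b \<in> VF \<and> EF b a"
    and g: "Inl g \<in> gclosure V E VF EF"
  shows "(\<exists>u\<in>VF. g = vpt u) \<or> (\<exists>u z s. EF u z \<and> 0 < s \<and> s < 1 \<and> g = ept u z s)"
proof -
  have "Inl g \<in> topspace X" using g closure_of_subset_topspace[of X "subgraph_pts VF EF"]
    unfolding gclosure_def by blast
  then have gc: "g \<in> complex_pts V E" by (cases rule: topspace_FreudenthalE) auto
  from gc show ?thesis
  proof (cases rule: complex_pts_cases)
    case (vert u)
    obtain g' where g': "g' \<in> vertex_pts VF \<union> inner_edge_pts EF" "Inl g' \<in> complex_ball V E g 1"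
      using gclosure_meets_complex_ball[OF g zero_less_one] .
    have "u \<in> supp g'" using supp_if_complex_ball[OF g'(2), of u] vert by (simp add: vpt_def)
    then have "u \<in> VF"
      using g'(1) EF unfolding vertex_pts_def inner_edge_pts_def by (auto simp: supp_ept edge_neq)
    then show ?thesis using vert by blast
  next
    case (edge u z t)
    have uz: "u \<noteq> z" using edge_neq edge by blast
    have e: "min t (1 - t) > 0" using edge by simp
    obtain g' where g': "g' \<in> vertex_pts VF \<union> inner_edge_pts EF" "Inl g' \<in> complex_ball V E g (min t (1 - t))"
      using gclosure_meets_complex_ball[OF g e] .
    have su: "u \<in> supp g'" "z \<in> supp g'"
      using supp_if_complex_ball[OF g'(2)] edge ept_at_first[OF uz] ept_at_second[OF uz] by auto
    have "EF u z"
    proof (cases "g' \<in> vertex_pts VF")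
      case True
      then show ?thesis using su uz unfolding vertex_pts_def by auto
    next
      case False
      then obtain c d s where cd: "EF c d" "0 < s" "s < 1" "g' = ept c d s"
        using g'(1) unfolding inner_edge_pts_def by blast
      have "c \<noteq> d" using EF[OF cd(1)] edge_neq by blast
      then have "supp g' = {c, d}" using cd supp_ept by metis
      then have "{c, d} = {u, z}" using su uz by auto
      then show ?thesis using cd(1) EF by (metis doubleton_eq_iff)
    qed
    then show ?thesis using edge by blast
  qed
qed

lemma Inl_vpt_in_gclosure:
  assumes "VF \<subseteq> V" "\<And>a b. EF a b \<Longrightarrow> E a b" "u \<in> VF"
  shows "Inl (vpt u) \<in> gclosure V E VF EF"
proof -
  have "subgraph_pts VF EF \<subseteq> topspace X"
  proof
    fix p assume "p \<in> subgraph_pts VF EF"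
    then obtain g where g: "p = Inl g" "g \<in> vertex_pts VF \<union> inner_edge_pts EF"
      unfolding subgraph_pts_def by blast
    then have "g \<in> complex_pts V E"
      unfolding complex_pts_def vertex_pts_def inner_edge_pts_def using assms(1,2) by blast
    then show "p \<in> topspace X" using Inl_in_topspace g by simp
  qed
  then have "subgraph_pts VF EF \<subseteq> gclosure V E VF EF" unfolding gclosure_def by (rule closure_of_subset)
  moreover have "Inl (vpt u) \<in> subgraph_pts VF EF"
    unfolding subgraph_pts_def vertex_pts_def using assms(3) by blast
  ultimately show ?thesis by blast
qed

lemma vertex_ball_cases:
  assumes "Inl g \<in> complex_ball V E (vpt u) (2/3)"
  shows "g = vpt u \<or> (\<exists>z s. E u z \<and> 0 < s \<and> s < 1 \<and> g = ept u z s)"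
proof -
  have gc: "g \<in> complex_pts V E" using assms complex_ball_complex_pts by blast
  have su: "u \<in> supp g" using supp_if_complex_ball[OF assms, of u] by (simp add: vpt_def)
  from gc show ?thesis
  proof (cases rule: complex_pts_cases)
    case (vert w) then show ?thesis using su by simp
  next
    case (edge c d s)
    have cd: "c \<noteq> d" using edge_neq edge(1) by blast
    have "supp g = {c, d}" using edge supp_ept cd by metis
    then have "u = c \<or> u = d" using su by auto
    then show ?thesis
    proof
      assume "u = c" then show ?thesis using edge by blast
    next
      assume "u = d"
      then have "g = ept u c (1 - s)" using edge ept_swap cd by metis
      moreover have "E u c" using edge(1) \<open>u = d\<close> edge_sym by blast
      moreover have "0 < 1 - s" "1 - s < 1" using edge by simp_all
      ultimately show ?thesis by blast
    qed
  qed
qed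

lemma ept_in_vertex_ball:
  assumes "E a b" "1/2 \<le> s" "s < 1"
  shows "Inl (ept a b s) \<in> complex_ball V E (vpt a) (2/3)"
proof -
  have ab: "a \<noteq> b" using edge_neq assms(1) by blast
  have c: "ept a b s \<in> complex_pts V E" using ept_in_complex_pts assms by simp
  have "\<bar>vpt a x - ept a b s x\<bar> < 2/3" for x
    using assms ab unfolding vpt_def ept_def by auto
  then show ?thesis unfolding complex_ball_def using c by blast
qed

(* Radius 2/3 > 1/2: the balls around the two ends of an edge cover the closed edge. *)
lemma supported_pts_edge_subset_balls:
  assumes "E l q" "p \<in> supported_pts V E {l, q}"
  shows "p \<in> complex_ball V E (vpt l) (2/3) \<union> complex_ball V E (vpt q) (2/3)"
proof (cases "p \<in> open_edge l q")
  case True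
  then obtain t where t: "p = Inl (ept l q t)" "0 < t" "t < 1" unfolding open_edge_def by blast
  have lq: "l \<noteq> q" using edge_neq assms(1) by blast
  show ?thesis
  proof (cases "1/2 \<le> t")
    case True
    then show ?thesis using ept_in_vertex_ball[OF assms(1) True t(3)] t(1) by blast
  next
    case False
    have "ept l q t = ept q l (1 - t)" using ept_swap[OF lq] by simp
    moreover have "1/2 \<le> 1 - t" "1 - t < 1" using False t(2) by simp_all
    moreover have "E q l" using edge_sym assms(1) by blast
    ultimately show ?thesis using ept_in_vertex_ball[of q l "1 - t"] t(1) by simp
  qed
next
  case False
  then have "p = Inl (vpt l) \<or> p = Inl (vpt q)" using supported_pts_edge_cases[OF assms] by blast
  moreover have "vpt l \<in> complex_pts V E" "vpt q \<in> complex_pts V E"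
    using edge_vertices[OF assms(1)] vpt_in_complex_pts by blast+
  ultimately show ?thesis using center_in_complex_ball[of _ "2/3"] by auto
qed

end

section \<open>Continuous maps on the unit interval\<close>

lemma continuous_map_interval_nbhd:
  assumes "continuous_map (top_of_set {0..1::real}) Y g" "openin Y U" "t \<in> {0..1}" "g t \<in> U"
  shows "\<exists>d>0. \<forall>s\<in>{0..1}. \<bar>s - t\<bar> < d \<longrightarrow> g s \<in> U"
proof -
  have "openin (top_of_set {0..1::real}) {s \<in> topspace (top_of_set {0..1::real}). g s \<in> U}"
    using openin_continuous_map_preimage[OF assms(1,2)] .
  then have o: "openin (top_of_set {0..1::real}) {s \<in> {0..1}. g s \<in> U}" by simp
  have "t \<in> {s \<in> {0..1}. g s \<in> U}" using assms by simp
  then obtain e where e: "e > 0" "\<forall>x'\<in>{0..1}. dist x' t < e \<longrightarrow> x' \<in> {s \<in> {0..1}. g s \<in> U}"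
    using o unfolding openin_euclidean_subtopology_iff by meson
  have "\<forall>s\<in>{0..1}. \<bar>s - t\<bar> < e \<longrightarrow> g s \<in> U"
  proof (intro ballI impI)
    fix s :: real assume "s \<in> {0..1}" "\<bar>s - t\<bar> < e"
    then have "dist s t < e" by (simp add: dist_real_def)
    then show "g s \<in> U" using e(2) \<open>s \<in> {0..1}\<close> by blast
  qed
  then show ?thesis using e(1) by blast
qed

lemma boundary_crossing_left:
  assumes g: "continuous_map (top_of_set {0..1::real}) Y g"
    and Ob: "openin Y Ob" and P: "closedin Y P" and OP: "Ob \<subseteq> P"
    and a: "0 \<le> a" and at: "a < t" and t1: "t \<le> 1"
    and gt: "g t \<in> Ob" and ga: "g a \<notin> Ob"
  shows "\<exists>t1. a \<le> t1 \<and> t1 < t \<and> (\<forall>s. t1 < s \<and> s \<le> t \<longrightarrow> g s \<in> Ob) \<and> g t1 \<in> P \<and> g t1 \<notin> Ob"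
proof -
  define N where "N = {s \<in> {a..t}. g s \<notin> Ob}"
  define m where "m = Sup N"
  have aN: "a \<in> N" using ga at unfolding N_def by simp
  have ne: "N \<noteq> {}" using aN by blast
  have bdd: "bdd_above N" unfolding N_def by (rule bdd_aboveI[of _ t]) auto
  have am: "a \<le> m" unfolding m_def using cSup_upper[OF aN bdd] .
  have mt: "m \<le> t" unfolding m_def by (rule cSup_least[OF ne]) (auto simp: N_def)
  have after: "g s \<in> Ob" if "m < s" "s \<le> t" for s
  proof (rule ccontr)
    assume "g s \<notin> Ob"
    then have "s \<in> N" unfolding N_def using that am by simp
    then have "s \<le> m" unfolding m_def using cSup_upper bdd by blast
    then show False using that by simp
  qed
  have m01: "m \<in> {0..1}" using am mt a t1 by simp
  have gm: "g m \<notin> Ob"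
  proof
    assume "g m \<in> Ob"
    then obtain d where d: "d > 0" "\<forall>s\<in>{0..1}. \<bar>s - m\<bar> < d \<longrightarrow> g s \<in> Ob"
      using continuous_map_interval_nbhd[OF g Ob m01] by blast
    have "m - d < Sup N" using d(1) unfolding m_def by simp
    then obtain s where s: "s \<in> N" "m - d < s" using less_cSupE ne by blast
    have "s \<le> m" unfolding m_def using cSup_upper[OF s(1) bdd] .
    have "s \<in> {0..1}" using s(1) a t1 unfolding N_def by auto
    moreover have "\<bar>s - m\<bar> < d" using s(2) \<open>s \<le> m\<close> by simp
    ultimately have "g s \<in> Ob" using d(2) by blast
    then show False using s(1) unfolding N_def by simp
  qed
  have "m \<noteq> t" using gm gt by blast
  then have mlt: "m < t" using mt by simp
  have gP: "g m \<in> P"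
  proof (rule ccontr)
    assume nP: "g m \<notin> P"
    have "g m \<in> topspace Y" using continuous_map_image_subset_topspace[OF g] m01 by auto
    then have "g m \<in> topspace Y - P" using nP by simp
    moreover have "openin Y (topspace Y - P)" using P by (simp add: closedin_def)
    ultimately obtain d where d: "d > 0" "\<forall>s\<in>{0..1}. \<bar>s - m\<bar> < d \<longrightarrow> g s \<in> topspace Y - P"
      using continuous_map_interval_nbhd[OF g _ m01] by blast
    define s where "s = min (m + d/2) t"
    have s: "m < s" "s \<le> t" "\<bar>s - m\<bar> < d" using d(1) mlt unfolding s_def by auto
    have "s \<in> {0..1}" using s am a t1 by simp
    then have "g s \<notin> P" using d(2) s(3) by blast
    moreover have "g s \<in> Ob" using after s by blast
    ultimately show False using OP by blast
  qed
  show ?thesis using am mlt after gP gm by blast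
qed

lemma boundary_crossing_right:
  assumes g: "continuous_map (top_of_set {0..1::real}) Y g"
    and Ob: "openin Y Ob" and P: "closedin Y P" and OP: "Ob \<subseteq> P"
    and b: "b \<le> 1" and tb: "t < b" and t0: "0 \<le> t"
    and gt: "g t \<in> Ob" and gb: "g b \<notin> Ob"
  shows "\<exists>t2. t < t2 \<and> t2 \<le> b \<and> (\<forall>s. t \<le> s \<and> s < t2 \<longrightarrow> g s \<in> Ob) \<and> g t2 \<in> P \<and> g t2 \<notin> Ob"
proof -
  have "continuous_map (top_of_set {0..1::real}) (top_of_set {0..1}) (\<lambda>s. 1 - s)"
    by (auto intro!: continuous_intros)
  from continuous_map_compose[OF this g]
  have "continuous_map (top_of_set {0..1::real}) Y (\<lambda>s. g (1 - s))" by (simp add: o_def)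
  from boundary_crossing_left[OF this Ob P OP, of "1 - b" "1 - t"] assms
  obtain t1 where t1: "1 - b \<le> t1" "t1 < 1 - t" "\<forall>s. t1 < s \<and> s \<le> 1 - t \<longrightarrow> g (1 - s) \<in> Ob"
    "g (1 - t1) \<in> P" "g (1 - t1) \<notin> Ob"
    by auto
  have "\<forall>s. t \<le> s \<and> s < 1 - t1 \<longrightarrow> g s \<in> Ob"
  proof (intro allI impI)
    fix s assume "t \<le> s \<and> s < 1 - t1"
    then show "g s \<in> Ob" using t1(3)[rule_format, of "1 - s"] by simp
  qed
  then show ?thesis using t1 by (intro exI[of _ "1 - t1"]) auto
qed

lemma eventually_within_realI:
  fixes a :: real
  assumes "d > 0" "\<forall>s\<in>J. \<bar>s - a\<bar> < d \<longrightarrow> P s"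
  shows "eventually P (at a within J)"
  unfolding eventually_at
proof (intro exI[of _ d] conjI ballI impI)
  show "d > 0" by (rule assms(1))
  fix x assume "x \<in> J" "x \<noteq> a \<and> dist x a < d"
  then show "P x" using assms(2) by (simp add: dist_real_def)
qed

lemma continuous_map_interval_clopen:
  assumes g: "continuous_map (top_of_set {0..1::real}) X g"
    and D: "closedin X D" and U: "openin X U" "D \<subseteq> U"
    and UD: "\<And>s. s \<in> {0..1} \<Longrightarrow> g s \<in> U \<Longrightarrow> g s \<in> D"
    and "g 0 \<in> D"
  shows "g 1 \<in> D"
proof -
  have loc: "\<forall>a\<in>{0..1}. eventually (\<lambda>b. (g a \<in> D) = (g b \<in> D)) (at a within {0..1})"
  proof
    fix a :: real assume a: "a \<in> {0..1}"
    show "eventually (\<lambda>b. (g a \<in> D) = (g b \<in> D)) (at a within {0..1})"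
    proof (cases "g a \<in> D")
      case True
      obtain d where "d > 0" "\<forall>s\<in>{0..1}. \<bar>s - a\<bar> < d \<longrightarrow> g s \<in> U"
        using continuous_map_interval_nbhd[OF g U(1) a] True U(2) by blast
      then show ?thesis using True UD by (intro eventually_within_realI) auto
    next
      case False
      have "openin X (topspace X - D)" using D by (simp add: closedin_def)
      moreover have "g a \<in> topspace X - D"
        using False continuous_map_image_subset_topspace[OF g] a by auto
      ultimately obtain d where "d > 0" "\<forall>s\<in>{0..1}. \<bar>s - a\<bar> < d \<longrightarrow> g s \<in> topspace X - D"
        using continuous_map_interval_nbhd[OF g _ a] by blast
      then show ?thesis using False by (intro eventually_within_realI) auto
    qed
  qed
  have "0 \<in> {0..1::real}" "1 \<in> {0..1::real}" by simp_all
  from connected_local_const[OF connected_Icc this loc] have "(g 0 \<in> D) = (g 1 \<in> D)" .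
  with assms(6) show ?thesis by simp
qed

section \<open>Topological caterpillars\<close>

locale caterpillar = sgraph V E for V :: "'a set" and E +
  fixes VT ET and h :: "real \<Rightarrow> 'a fpoint"
  assumes lf: "locally_finite V E" and tc: "top_caterpillar V E VT ET h" and VTV: "VT = V"
begin

abbreviation "spine \<equiv> spine_V VT ET"
abbreviation "L \<equiv> leaves VT ET"
abbreviation "spine_arc \<equiv> gclosure V E spine (spine_E VT ET)"
abbreviation "pos \<equiv> arc_pos h"

lemma forest: "forest_in VT ET V E" using tc unfolding top_caterpillar_def by blast
lemma simple_T: "simple_graph VT ET" using forest unfolding forest_in_def subgraph_def by blast
lemma ET_imp_E: "ET x y \<Longrightarrow> E x y" using forest unfolding forest_in_def subgraph_def by blast
lemma ET_sym: "ET x y \<Longrightarrow> ET y x" using simple_T unfolding simple_graph_def by blast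
lemma ET_vertices: "ET x y \<Longrightarrow> x \<in> VT \<and> y \<in> VT" using simple_T unfolding simple_graph_def by blast

lemma arc_homeomorphic: "homeomorphic_map (top_of_set {0..1}) (subtopology X spine_arc) h"
  using tc unfolding top_caterpillar_def arc_param_def by blast

lemma arc_subset_topspace: "spine_arc \<subseteq> topspace X"
  unfolding gclosure_def by (rule closure_of_subset_topspace)

lemma arc_image: "h ` {0..1} = spine_arc"
  using homeomorphic_imp_surjective_map[OF arc_homeomorphic] arc_subset_topspace by auto

lemma arc_inj: "inj_on h {0..1}"
  using homeomorphic_imp_injective_map[OF arc_homeomorphic] by simp

lemma arc_continuous: "continuous_map (top_of_set {0..1}) X h"
  using homeomorphic_imp_continuous_map[OF arc_homeomorphic] continuous_map_in_subtopology by blast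

lemma h_in_arc: "t \<in> {0..1} \<Longrightarrow> h t \<in> spine_arc" using arc_image by blast

lemma spine_edge_props: "spine_E VT ET a b \<Longrightarrow> E a b \<and> a \<in> spine \<and> b \<in> spine \<and> spine_E VT ET b a"
  unfolding spine_E_def spine_V_def using ET_imp_E ET_vertices ET_sym by blast

lemma spine_subset_V: "spine \<subseteq> V" unfolding spine_V_def using VTV by blast

lemma spine_not_leaf: "u \<in> spine \<Longrightarrow> u \<notin> L" unfolding spine_V_def by simp
lemma spine_in_VT: "u \<in> spine \<Longrightarrow> u \<in> VT" unfolding spine_V_def by simp
lemma VT_spine_or_leaf: "u \<in> VT \<Longrightarrow> u \<in> spine \<or> u \<in> L" unfolding spine_V_def by blast

lemma Inl_vpt_in_arc: "z \<in> spine \<Longrightarrow> Inl (vpt z) \<in> spine_arc"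
  by (rule Inl_vpt_in_gclosure[OF spine_subset_V]) (simp_all add: spine_edge_props)

lemma spine_pos_props:
  assumes "z \<in> spine" shows "pos z \<in> {0..1}" "h (pos z) = Inl (vpt z)"
proof -
  have "Inl (vpt z) \<in> h ` {0..1}" using Inl_vpt_in_arc assms arc_image by blast
  then show "pos z \<in> {0..1}" "h (pos z) = Inl (vpt z)" unfolding arc_pos_def
    using inv_into_into[of "Inl (vpt z)" h "{0..1}"] f_inv_into_f[of "Inl (vpt z)" h "{0..1}"]
    by blast+
qed

lemma Inl_in_arc_cases:
  assumes "Inl g \<in> spine_arc"
  shows "(\<exists>u\<in>spine. g = vpt u) \<or> (\<exists>u z s. spine_E VT ET u z \<and> 0 < s \<and> s < 1 \<and> g = ept u z s)"
proof -
  have "\<And>a b. spine_E VT ET a b \<Longrightarrow> E a b \<and> a \<in> spine \<and> b \<in> spine \<and> spine_E VT ET b a"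
    by (rule spine_edge_props)
  from Inl_in_gclosure_cases[OF spine_subset_V this assms] show ?thesis .
qed

lemma h_eq_vertex_imp_pos:
  assumes "t \<in> {0..1}" "h t = Inl (vpt z)"
  shows "z \<in> spine" "t = pos z"
proof -
  have on_arc: "Inl (vpt z) \<in> spine_arc" using h_in_arc[OF assms(1)] assms(2) by simp
  have not_inner: "vpt z \<noteq> ept u w s" if "spine_E VT ET u w" "0 < s" "s < 1" for u w s
  proof -
    have "u \<noteq> w" using spine_edge_props[OF that(1)] edge_neq by blast
    then show ?thesis by (rule vpt_ne_ept[OF _ that(2,3)])
  qed
  from Inl_in_arc_cases[OF on_arc] show zs: "z \<in> spine" using not_inner by auto
  have "h t = h (pos z)" using spine_pos_props(2)[OF zs] assms(2) by simp
  then show "t = pos z" using spine_pos_props(1)[OF zs] assms(1) arc_inj unfolding inj_on_def by blast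
qed

lemma pos_inj:
  assumes "z \<in> spine" "z' \<in> spine" "pos z = pos z'" shows "z = z'"
proof -
  have "Inl (vpt z) = h (pos z)" using spine_pos_props(2)[OF assms(1)] by simp
  also have "\<dots> = h (pos z')" using assms(3) by simp
  also have "\<dots> = Inl (vpt z')" using spine_pos_props(2)[OF assms(2)] .
  finally show ?thesis by simp
qed

lemma arc_point_cases:
  assumes "t \<in> {0..1}"
  obtains (vert) z where "z \<in> spine" "h t = Inl (vpt z)"
  | (edge) u z s where "spine_E VT ET u z" "0 < s" "s < 1" "h t = Inl (ept u z s)"
  | (at_end) \<omega> where "\<omega> \<in> ends V E" "h t = Inr \<omega>"
proof -
  have "h t \<in> topspace X" using h_in_arc assms arc_subset_topspace by blast
  then show ?thesis
  proof (cases rule: topspace_FreudenthalE)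
    case (inl g)
    have "(\<exists>u\<in>spine. g = vpt u) \<or> (\<exists>u z s. spine_E VT ET u z \<and> 0 < s \<and> s < 1 \<and> g = ept u z s)"
      using Inl_in_arc_cases h_in_arc[OF assms] inl(2) by simp
    then show ?thesis
    proof
      assume "\<exists>u\<in>spine. g = vpt u" then show ?thesis using that(1) inl(2) by blast
    next
      assume "\<exists>u z s. spine_E VT ET u z \<and> 0 < s \<and> s < 1 \<and> g = ept u z s"
      then obtain u z s where "spine_E VT ET u z" "0 < s" "s < 1" "g = ept u z s" by blast
      then show ?thesis using that(2) inl(2) by blast
    qed
  next
    case (inr \<omega>) then show ?thesis using that by blast
  qed
qed

lemma arc_crossing_open_edge:
  assumes E: "E u z" and r: "0 \<le> \<alpha>" "\<alpha> < t" "t < \<beta>" "\<beta> \<le> 1"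
    and ht: "h t \<in> open_edge u z" and ha: "h \<alpha> \<notin> open_edge u z" and hb: "h \<beta> \<notin> open_edge u z"
  shows "\<exists>t1 t2. \<alpha> \<le> t1 \<and> t1 < t \<and> t < t2 \<and> t2 \<le> \<beta> \<and> (\<forall>s. t1 < s \<and> s < t2 \<longrightarrow> h s \<in> open_edge u z)
     \<and> (h t1 = Inl (vpt u) \<or> h t1 = Inl (vpt z)) \<and> (h t2 = Inl (vpt u) \<or> h t2 = Inl (vpt z))"
proof -
  have O: "openin X (open_edge u z)" using openin_open_edge[OF E] .
  have fin: "finite {u, z}" by simp
  have sub: "{u, z} \<subseteq> V" using edge_vertices[OF E] by simp
  have P: "closedin X (supported_pts V E {u, z})" using closedin_supported_pts[OF fin sub] .
  have OP: "open_edge u z \<subseteq> supported_pts V E {u, z}" using open_edge_subset_supported_pts[OF E] .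
  obtain t1 where t1: "\<alpha> \<le> t1" "t1 < t" "\<forall>s. t1 < s \<and> s \<le> t \<longrightarrow> h s \<in> open_edge u z"
     "h t1 \<in> supported_pts V E {u, z}" "h t1 \<notin> open_edge u z"
    using boundary_crossing_left[OF arc_continuous O P OP r(1) r(2) _ ht ha] r by auto
  obtain t2 where t2: "t < t2" "t2 \<le> \<beta>" "\<forall>s. t \<le> s \<and> s < t2 \<longrightarrow> h s \<in> open_edge u z"
     "h t2 \<in> supported_pts V E {u, z}" "h t2 \<notin> open_edge u z"
    using boundary_crossing_right[OF arc_continuous O P OP r(4) r(3) _ ht hb] r by auto
  have mid: "\<forall>s. t1 < s \<and> s < t2 \<longrightarrow> h s \<in> open_edge u z"
  proof (intro allI impI)
    fix s assume s: "t1 < s \<and> s < t2"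
    show "h s \<in> open_edge u z"
    proof (cases "s \<le> t")
      case True then show ?thesis using t1(3) s by blast
    next
      case False then show ?thesis using t2(3) s by simp
    qed
  qed
  have "h t1 = Inl (vpt u) \<or> h t1 = Inl (vpt z)" using supported_pts_edge_cases[OF E t1(4) t1(5)] .
  moreover have "h t2 = Inl (vpt u) \<or> h t2 = Inl (vpt z)" using supported_pts_edge_cases[OF E t2(4) t2(5)] .
  ultimately show ?thesis using t1(1,2) t2(1,2) mid by blast
qed

lemma arc_near_vertex_on_spine_edge:
  assumes q: "q \<in> spine" and t: "t \<in> {0..1}" "t \<noteq> pos q" and hb: "h t \<in> complex_ball V E (vpt q) (2/3)"
  shows "\<exists>z s. spine_E VT ET q z \<and> 0 < s \<and> s < 1 \<and> h t = Inl (ept q z s)"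
proof -
  obtain g where g: "h t = Inl g" using hb unfolding complex_ball_def by blast
  have gb: "Inl g \<in> complex_ball V E (vpt q) (2/3)" using hb g by simp
  have "g \<noteq> vpt q"
  proof
    assume "g = vpt q"
    then have "t = pos q" using h_eq_vertex_imp_pos(2)[OF t(1)] g by simp
    then show False using t(2) by simp
  qed
  then obtain z s where zs: "E q z" "0 < s" "s < 1" "g = ept q z s" using vertex_ball_cases[OF gb] by blast
  have qz: "q \<noteq> z" using edge_neq zs(1) by blast
  have "Inl g \<in> spine_arc" using h_in_arc[OF t(1)] g by simp
  then have "(\<exists>u\<in>spine. g = vpt u) \<or> (\<exists>u w s. spine_E VT ET u w \<and> 0 < s \<and> s < 1 \<and> g = ept u w s)"
    by (rule Inl_in_arc_cases)
  then have "spine_E VT ET q z"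
  proof
    assume "\<exists>u\<in>spine. g = vpt u"
    then obtain u where "g = vpt u" by blast
    then show ?thesis using vpt_ne_ept[OF qz zs(2) zs(3), of u] zs(4) by simp
  next
    assume "\<exists>u w s. spine_E VT ET u w \<and> 0 < s \<and> s < 1 \<and> g = ept u w s"
    then obtain c d s' where cd: "spine_E VT ET c d" "0 < s'" "s' < 1" "g = ept c d s'" by blast
    have cd': "c \<noteq> d" using spine_edge_props[OF cd(1)] edge_neq by blast
    have "supp g = {c, d}" using supp_ept[OF cd' cd(2) cd(3)] cd(4) by simp
    moreover have "supp g = {q, z}" using supp_ept[OF qz zs(2) zs(3)] zs(4) by simp
    ultimately have "{c, d} = {q, z}" by simp
    then have "(c = q \<and> d = z) \<or> (c = z \<and> d = q)" by (simp add: doubleton_eq_iff)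
    then show ?thesis using cd(1) spine_edge_props by blast
  qed
  then show ?thesis using zs g by blast
qed

lemma spine_edge_interval:
  assumes a: "a \<in> spine" and b: "b \<in> spine" and t: "pos a \<le> t" "t \<le> pos b"
    and ue: "spine_E VT ET u z" "0 < s" "s < 1" "h t = Inl (ept u z s)"
  obtains t1 t2 where "{t1, t2} = {pos u, pos z}" "pos a \<le> t1" "t1 < t" "t < t2" "t2 \<le> pos b"
    "\<And>c. c \<in> spine \<Longrightarrow> \<not> (t1 < pos c \<and> pos c < t2)"
proof -
  have Euz: "E u z" using spine_edge_props[OF ue(1)] by simp
  have uz: "u \<noteq> z" using edge_neq Euz by blast
  have aa: "pos a \<in> {0..1}" "h (pos a) \<notin> open_edge u z"
    using spine_pos_props[OF a] Inl_vpt_notin_open_edge[OF uz] by simp_all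
  have bb: "pos b \<in> {0..1}" "h (pos b) \<notin> open_edge u z"
    using spine_pos_props[OF b] Inl_vpt_notin_open_edge[OF uz] by simp_all
  have ht: "h t \<in> open_edge u z" unfolding open_edge_def using ue by blast
  then have "pos a < t" "t < pos b" using t aa(2) bb(2) by (auto simp: order.order_iff_strict)
  then obtain t1 t2 where T: "pos a \<le> t1" "t1 < t" "t < t2" "t2 \<le> pos b"
     "\<forall>s. t1 < s \<and> s < t2 \<longrightarrow> h s \<in> open_edge u z"
     "h t1 = Inl (vpt u) \<or> h t1 = Inl (vpt z)" "h t2 = Inl (vpt u) \<or> h t2 = Inl (vpt z)"
    using arc_crossing_open_edge[OF Euz _ _ _ _ ht aa(2) bb(2)] aa(1) bb(1) by auto
  have t12: "t1 \<in> {0..1}" "t2 \<in> {0..1}" using T(1-4) aa(1) bb(1) by auto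
  have "h t1 \<noteq> h t2" using arc_inj t12 T(2,3) unfolding inj_on_def by force
  then have "{h t1, h t2} = {Inl (vpt u), Inl (vpt z)}" using T(6,7) by auto
  then have "{t1, t2} = {pos u, pos z}"
    using h_eq_vertex_imp_pos(2)[OF t12(1)] h_eq_vertex_imp_pos(2)[OF t12(2)] by (auto simp: doubleton_eq_iff)
  moreover have "\<not> (t1 < pos c \<and> pos c < t2)" if "c \<in> spine" for c
    using T(5) spine_pos_props(2)[OF that] Inl_vpt_notin_open_edge[OF uz] by metis
  ultimately show ?thesis using that T(1-4) by blast
qed

lemma spine_edge_pos_between:
  assumes "a \<in> spine" "b \<in> spine" "pos a \<le> t" "t \<le> pos b"
    and "spine_E VT ET u z" "0 < s" "s < 1" "h t = Inl (ept u z s)"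
  shows "pos a \<le> pos u \<and> pos u \<le> pos b \<and> pos a \<le> pos z \<and> pos z \<le> pos b"
proof -
  obtain t1 t2 where "{t1, t2} = {pos u, pos z}" "pos a \<le> t1" "t1 < t" "t < t2" "t2 \<le> pos b"
    using spine_edge_interval[OF assms] .
  then show ?thesis by (auto simp: doubleton_eq_iff)
qed

lemma consecAI:
  assumes "u \<in> spine" "z \<in> spine" "pos u < pos z" "\<And>c. c \<in> spine \<Longrightarrow> \<not> (pos u < pos c \<and> pos c < pos z)"
  shows "consecA VT ET h u z"
  using assms unfolding consecA_def lessA_def by blast

lemma spine_edge_near_vertex:
  assumes q: "q \<in> spine"
  obtains d where "d > 0" "\<And>t. t \<in> {0..1} \<Longrightarrow> t \<noteq> pos q \<Longrightarrow> \<bar>t - pos q\<bar> < d \<Longrightarrow>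
    \<exists>z s. spine_E VT ET q z \<and> 0 < s \<and> s < 1 \<and> h t = Inl (ept q z s)"
proof -
  have vc: "vpt q \<in> complex_pts V E" using vpt_in_complex_pts spine_subset_V q by blast
  have "openin X (complex_ball V E (vpt q) (2/3))" using openin_complex_ball[OF vc] by simp
  moreover have "h (pos q) \<in> complex_ball V E (vpt q) (2/3)"
    using center_in_complex_ball[OF vc] spine_pos_props(2)[OF q] by simp
  ultimately obtain d where "d > 0" "\<forall>s\<in>{0..1}. \<bar>s - pos q\<bar> < d \<longrightarrow> h s \<in> complex_ball V E (vpt q) (2/3)"
    using continuous_map_interval_nbhd[OF arc_continuous _ spine_pos_props(1)[OF q]] by blast
  then show ?thesis using that arc_near_vertex_on_spine_edge[OF q] by blast
qed

lemma spine_successor_exists: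
  assumes q: "q \<in> spine" and b: "b \<in> spine" and qb: "pos q < pos b"
  shows "\<exists>z. consecA VT ET h q z"
proof -
  obtain d where d: "d > 0" "\<And>t. t \<in> {0..1} \<Longrightarrow> t \<noteq> pos q \<Longrightarrow> \<bar>t - pos q\<bar> < d \<Longrightarrow>
    \<exists>z s. spine_E VT ET q z \<and> 0 < s \<and> s < 1 \<and> h t = Inl (ept q z s)"
    using spine_edge_near_vertex[OF q] by blast
  define m where "m = min d (pos b - pos q)"
  define t where "t = pos q + m / 2"
  have "0 < m" "m \<le> d" "m \<le> pos b - pos q" using d(1) qb unfolding m_def by auto
  then have t: "pos q < t" "t < pos b" "\<bar>t - pos q\<bar> < d" unfolding t_def by auto
  moreover have "t \<in> {0..1}" using t spine_pos_props(1)[OF q] spine_pos_props(1)[OF b] by auto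
  ultimately obtain z s where zs: "spine_E VT ET q z" "0 < s" "s < 1" "h t = Inl (ept q z s)"
    using d(2) by fastforce
  obtain t1 t2 where T: "{t1, t2} = {pos q, pos z}" "pos q \<le> t1" "t1 < t" "t < t2"
    "\<And>c. c \<in> spine \<Longrightarrow> \<not> (t1 < pos c \<and> pos c < t2)"
    using spine_edge_interval[OF q b _ _ zs] t by (smt (verit))
  then have "t1 = pos q" "t2 = pos z" using t by (auto simp: doubleton_eq_iff)
  then have "consecA VT ET h q z"
    using consecAI[OF q] spine_edge_props[OF zs(1)] T(3-5) by simp
  then show ?thesis by blast
qed

lemma spine_predecessor_exists:
  assumes q: "q \<in> spine" and b: "b \<in> spine" and bq: "pos b < pos q"
  shows "\<exists>z. consecA VT ET h z q"
proof -
  obtain d where d: "d > 0" "\<And>t. t \<in> {0..1} \<Longrightarrow> t \<noteq> pos q \<Longrightarrow> \<bar>t - pos q\<bar> < d \<Longrightarrow>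
    \<exists>z s. spine_E VT ET q z \<and> 0 < s \<and> s < 1 \<and> h t = Inl (ept q z s)"
    using spine_edge_near_vertex[OF q] by blast
  define m where "m = min d (pos q - pos b)"
  define t where "t = pos q - m / 2"
  have "0 < m" "m \<le> d" "m \<le> pos q - pos b" using d(1) bq unfolding m_def by auto
  then have t: "t < pos q" "pos b < t" "\<bar>t - pos q\<bar> < d" unfolding t_def by auto
  moreover have "t \<in> {0..1}" using t spine_pos_props(1)[OF q] spine_pos_props(1)[OF b] by auto
  ultimately obtain z s where zs: "spine_E VT ET q z" "0 < s" "s < 1" "h t = Inl (ept q z s)"
    using d(2) by fastforce
  obtain t1 t2 where T: "{t1, t2} = {pos q, pos z}" "t1 < t" "t < t2" "t2 \<le> pos q"
    "\<And>c. c \<in> spine \<Longrightarrow> \<not> (t1 < pos c \<and> pos c < t2)"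
    using spine_edge_interval[OF b q _ _ zs] t by (smt (verit))
  then have "t1 = pos z" "t2 = pos q" using t by (auto simp: doubleton_eq_iff)
  then have "consecA VT ET h z q"
    using consecAI[OF _ q] spine_edge_props[OF zs(1)] T(2,3,5) by simp
  then show ?thesis by blast
qed

abbreviation "closure_T \<equiv> gclosure V E VT ET"

lemma leaf_nbhd_singleton:
  assumes "l \<in> L" obtains q where "nbhd ET l = {q}"
proof -
  have "card (nbhd ET l) = 1" using assms unfolding leaves_def by blast
  then show ?thesis using card_1_singletonE that by blast
qed

lemma leaf_in_VT: "l \<in> L \<Longrightarrow> l \<in> VT" unfolding leaves_def by simp

lemma Inl_vpt_in_closure_T: "u \<in> VT \<Longrightarrow> Inl (vpt u) \<in> closure_T"
  by (rule Inl_vpt_in_gclosure) (simp_all add: VTV ET_imp_E)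

lemma Inl_in_closure_T_cases:
  assumes "Inl g \<in> closure_T"
  shows "(\<exists>u\<in>VT. g = vpt u) \<or> (\<exists>u z s. ET u z \<and> 0 < s \<and> s < 1 \<and> g = ept u z s)"
proof -
  have "\<And>a b. ET a b \<Longrightarrow> E a b \<and> a \<in> VT \<and> b \<in> VT \<and> ET b a"
    using ET_imp_E ET_vertices ET_sym by blast
  moreover have "VT \<subseteq> V" using VTV by simp
  ultimately show ?thesis using Inl_in_gclosure_cases assms by blast
qed

lemma closure_T_vertex_ball_subset:
  assumes x: "x \<in> VT" and nb: "nbhd ET x = {y}" and gG: "Inl g \<in> closure_T"
    and gb: "Inl g \<in> complex_ball V E (vpt x) (2/3)"
  shows "Inl g \<in> supported_pts V E {x, y}"
proof -
  have gc: "g \<in> complex_pts V E" using gb complex_ball_complex_pts by blast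
  from vertex_ball_cases[OF gb] show ?thesis
  proof
    assume "g = vpt x" then show ?thesis unfolding supported_pts_def using gc by simp
  next
    assume "\<exists>z s. E x z \<and> 0 < s \<and> s < 1 \<and> g = ept x z s"
    then obtain z s where zs: "E x z" "0 < s" "s < 1" "g = ept x z s" by blast
    have xz: "x \<noteq> z" using edge_neq zs(1) by blast
    have supp_g: "supp g = {x, z}" using supp_ept[OF xz zs(2) zs(3)] zs(4) by simp
    from Inl_in_closure_T_cases[OF gG] have "ET x z"
    proof
      assume "\<exists>u\<in>VT. g = vpt u"
      then obtain u where "g = vpt u" by blast
      then show ?thesis using vpt_ne_ept[OF xz zs(2) zs(3), of u] zs(4) by simp
    next
      assume "\<exists>u w s. ET u w \<and> 0 < s \<and> s < 1 \<and> g = ept u w s"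
      then obtain c d s' where cd: "ET c d" "0 < s'" "s' < 1" "g = ept c d s'" by blast
      have cd': "c \<noteq> d" using edge_neq ET_imp_E cd(1) by blast
      have "supp g = {c, d}" using supp_ept[OF cd' cd(2) cd(3)] cd(4) by simp
      then have "{c, d} = {x, z}" using supp_g by simp
      then have "(c = x \<and> d = z) \<or> (c = z \<and> d = x)" by (simp add: doubleton_eq_iff)
      then show ?thesis using cd(1) ET_sym by blast
    qed
    then have "z \<in> nbhd ET x" unfolding nbhd_def by simp
    then have "z = y" using nb by simp
    then show ?thesis unfolding supported_pts_def using gc supp_g by simp
  qed
qed

lemma spine_nonempty: "spine \<noteq> {}"
proof
  assume e: "spine = {}"
  have "spine_E VT ET = (\<lambda>a b. False)"
  proof (intro ext)
    fix a b show "spine_E VT ET a b = False" using spine_edge_props[of a b] e by blast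
  qed
  then have "subgraph_pts spine (spine_E VT ET) = {}"
    using e unfolding subgraph_pts_def vertex_pts_def inner_edge_pts_def by simp
  then have "spine_arc = {}" unfolding gclosure_def by simp
  moreover have "h 0 \<in> spine_arc" using h_in_arc by simp
  ultimately show False by simp
qed

lemma closure_T_near_leaf_edge:
  assumes nl: "nbhd ET l = {q}" and nq: "nbhd ET q = {l}" and lq: "l \<in> VT" "q \<in> VT"
    and pG: "p \<in> closure_T" and pU: "p \<in> complex_ball V E (vpt l) (2/3) \<union> complex_ball V E (vpt q) (2/3)"
  shows "p \<in> supported_pts V E {l, q}"
proof -
  obtain g where g: "p = Inl g" using pU unfolding complex_ball_def by blast
  show ?thesis
  proof (cases "p \<in> complex_ball V E (vpt l) (2/3)")
    case True
    then show ?thesis using closure_T_vertex_ball_subset[OF lq(1) nl] pG g by simp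
  next
    case False
    then have "p \<in> complex_ball V E (vpt q) (2/3)" using pU by blast
    then have "p \<in> supported_pts V E {q, l}" using closure_T_vertex_ball_subset[OF lq(2) nq] pG g by simp
    moreover have "{q, l} = {l, q}" by blast
    ultimately show ?thesis by simp
  qed
qed

lemma path_in_closure_T:
  assumes "u \<in> VT" "w \<in> VT" "u \<noteq> w"
  obtains g where "continuous_map (top_of_set {0..1::real}) X g" "g 0 = Inl (vpt u)" "g 1 = Inl (vpt w)"
    "\<And>s. s \<in> {0..1} \<Longrightarrow> g s \<in> closure_T"
proof -
  have "arc_connected_set X closure_T" using tc unfolding top_caterpillar_def by blast
  then have "\<exists>A g. A \<subseteq> closure_T \<and> arc_param X A g \<and> g 0 = Inl (vpt u) \<and> g 1 = Inl (vpt w)"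
    using Inl_vpt_in_closure_T[OF assms(1)] Inl_vpt_in_closure_T[OF assms(2)] assms(3)
    unfolding arc_connected_set_def by simp
  then obtain A g where A: "A \<subseteq> closure_T" "arc_param X A g" "g 0 = Inl (vpt u)" "g 1 = Inl (vpt w)"
    by (elim exE conjE)
  then have hom: "homeomorphic_map (top_of_set {0..1}) (subtopology X A) g"
    unfolding arc_param_def by blast
  have "continuous_map (top_of_set {0..1}) X g"
    using homeomorphic_imp_continuous_map[OF hom] continuous_map_in_subtopology by blast
  moreover have "g s \<in> closure_T" if "s \<in> {0..1}" for s
  proof -
    have "g s \<in> topspace (subtopology X A)"
      using homeomorphic_imp_surjective_map[OF hom] that by force
    then show ?thesis using A(1) by auto
  qed
  ultimately show ?thesis using that A(3,4) by blast
qed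

(* Two adjacent leaves would span a component of the closure of T that is closed and, inside that
   closure, open; an arc from it to the spine would have to leave it. *)
lemma leaf_neighbour_in_spine:
  assumes l: "l \<in> L" and lq: "ET l q"
  shows "q \<in> spine"
proof (rule ccontr)
  assume "q \<notin> spine"
  then have qL: "q \<in> L" using ET_vertices lq unfolding spine_V_def by blast
  have "q \<in> nbhd ET l" "l \<in> nbhd ET q" using lq ET_sym[OF lq] unfolding nbhd_def by simp_all
  moreover obtain y y' where "nbhd ET l = {y}" "nbhd ET q = {y'}"
    using leaf_nbhd_singleton[OF l] leaf_nbhd_singleton[OF qL] by metis
  ultimately have nl: "nbhd ET l = {q}" and nq: "nbhd ET q = {l}" by auto
  have lV: "l \<in> VT" and qV: "q \<in> VT" using leaf_in_VT l qL by auto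
  have Elq: "E l q" using ET_imp_E lq .
  obtain z where z: "z \<in> spine" using spine_nonempty by blast
  then have zlq: "z \<noteq> l" "z \<noteq> q" using l qL unfolding spine_V_def by auto
  obtain g where g: "continuous_map (top_of_set {0..1::real}) X g" "g 0 = Inl (vpt l)" "g 1 = Inl (vpt z)"
    "\<And>s. s \<in> {0..1} \<Longrightarrow> g s \<in> closure_T"
    using path_in_closure_T[OF lV spine_in_VT[OF z] not_sym[OF zlq(1)]] by blast
  have "g 1 \<in> supported_pts V E {l, q}"
  proof (rule continuous_map_interval_clopen[OF g(1)])
    show "closedin X (supported_pts V E {l, q})"
      using closedin_supported_pts[of "{l, q}"] edge_vertices[OF Elq] by simp
    show "openin X (complex_ball V E (vpt l) (2/3) \<union> complex_ball V E (vpt q) (2/3))"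
      using openin_complex_ball vpt_in_complex_pts edge_vertices[OF Elq] by (intro openin_Un) auto
    show "supported_pts V E {l, q} \<subseteq> complex_ball V E (vpt l) (2/3) \<union> complex_ball V E (vpt q) (2/3)"
      using supported_pts_edge_subset_balls[OF Elq] by blast
    show "g s \<in> supported_pts V E {l, q}"
      if "s \<in> {0..1}" "g s \<in> complex_ball V E (vpt l) (2/3) \<union> complex_ball V E (vpt q) (2/3)" for s
      using closure_T_near_leaf_edge[OF nl nq lV qV g(4)[OF that(1)] that(2)] .
    show "g 0 \<in> supported_pts V E {l, q}"
      using g(2) vpt_in_complex_pts edge_vertices[OF Elq] unfolding supported_pts_def by auto
  qed
  then show False using g(3) zlq unfolding supported_pts_def by auto
qed

section \<open>The partition of the vertices and its order\<close>

abbreviation "cls \<equiv> clsT VT ET h"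
abbreviation "PT \<equiv> partT VT ET h"
definition "class_after v' w' = insert w' (nbhd ET v' \<inter> L)"
definition "class_top m = nbhd ET m \<inter> L"

lemma lessA_iff: "lessA VT ET h u v \<longleftrightarrow> u \<in> spine \<and> v \<in> spine \<and> pos u < pos v"
  unfolding lessA_def by simp

lemma consecA_less: "consecA VT ET h v w \<Longrightarrow> v \<in> spine \<and> w \<in> spine \<and> pos v < pos w"
  unfolding consecA_def lessA_iff by blast

lemma consecA_nothing_between: "consecA VT ET h v w \<Longrightarrow> u \<in> spine \<Longrightarrow> pos v < pos u \<Longrightarrow> pos u < pos w \<Longrightarrow> False"
  unfolding consecA_def lessA_iff by blast

lemma consecA_unique_left:
  assumes "consecA VT ET h v1 w" "consecA VT ET h v2 w" shows "v1 = v2"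
proof -
  have a: "v1 \<in> spine" "w \<in> spine" "pos v1 < pos w" using consecA_less[OF assms(1)] by simp_all
  have b: "v2 \<in> spine" "pos v2 < pos w" using consecA_less[OF assms(2)] by simp_all
  have "\<not> pos v1 < pos v2" using consecA_nothing_between[OF assms(1) b(1)] b(2) by blast
  moreover have "\<not> pos v2 < pos v1" using consecA_nothing_between[OF assms(2) a(1)] a(3) by blast
  ultimately have "pos v1 = pos v2" by simp
  then show ?thesis using pos_inj a(1) b(1) by blast
qed

lemma consecA_unique_right:
  assumes "consecA VT ET h v w1" "consecA VT ET h v w2" shows "w1 = w2"
proof -
  have a: "v \<in> spine" "w1 \<in> spine" "pos v < pos w1" using consecA_less[OF assms(1)] by simp_all
  have b: "w2 \<in> spine" "pos v < pos w2" using consecA_less[OF assms(2)] by simp_all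
  have "\<not> pos w1 < pos w2" using consecA_nothing_between[OF assms(2) a(2)] a(3) by blast
  moreover have "\<not> pos w2 < pos w1" using consecA_nothing_between[OF assms(1) b(1)] b(2) by blast
  ultimately have "pos w1 = pos w2" by simp
  then show ?thesis using pos_inj a(2) b(1) by blast
qed

lemma maxA_unique: "maxA VT ET h m1 \<Longrightarrow> maxA VT ET h m2 \<Longrightarrow> m1 = m2"
  unfolding maxA_def lessA_iff using pos_inj by (meson linorder_neqE_linordered_idom)

lemma maxA_not_consecA: "maxA VT ET h m \<Longrightarrow> consecA VT ET h m w \<Longrightarrow> False"
  unfolding maxA_def consecA_def by blast

lemma minA_not_consecA: "minA VT ET h s \<Longrightarrow> consecA VT ET h v s \<Longrightarrow> False"
  unfolding minA_def consecA_def by blast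

lemma leaf_neighbour_unique:
  assumes "l \<in> L" "ET a l" "ET b l" shows "a = b"
proof -
  obtain q where q: "nbhd ET l = {q}" using leaf_nbhd_singleton assms(1) by blast
  have "a \<in> nbhd ET l" "b \<in> nbhd ET l" using assms(2,3) ET_sym unfolding nbhd_def by auto
  then show ?thesis using q by simp
qed

lemma partT_cases:
  assumes "P \<in> PT"
  obtains (w) v' w' where "consecA VT ET h v' w'" "P = class_after v' w'"
  | (p) m where "maxA VT ET h m" "P = class_top m"
  | (s) s where "minA VT ET h s" "P = {s}"
  using assms unfolding partT_def class_after_def class_top_def by blast

lemma class_after_in_partT: "consecA VT ET h v' w' \<Longrightarrow> class_after v' w' \<in> PT"
  unfolding partT_def class_after_def by blast
lemma class_top_in_partT: "maxA VT ET h m \<Longrightarrow> class_top m \<in> PT"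
  unfolding partT_def class_top_def by blast
lemma min_singleton_in_partT: "minA VT ET h s \<Longrightarrow> {s} \<in> PT"
  unfolding partT_def by blast

lemma mem_class_after: "u \<in> class_after v' w' \<longleftrightarrow> u = w' \<or> (ET v' u \<and> u \<in> L)"
  unfolding class_after_def nbhd_def by auto
lemma mem_class_top: "u \<in> class_top m \<longleftrightarrow> ET m u \<and> u \<in> L"
  unfolding class_top_def nbhd_def by auto

lemma spine_notin_class_top: "u \<in> spine \<Longrightarrow> u \<notin> class_top m"
  using mem_class_top spine_not_leaf by blast

lemma partT_member_cases:
  assumes "P \<in> PT" "u \<in> P" shows "u \<in> spine \<or> u \<in> L"
  using assms(1)
proof (cases rule: partT_cases)
  case (w v' w')
  then show ?thesis using assms(2) consecA_less[OF w(1)] by (auto simp: mem_class_after)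
next
  case (p m)
  then show ?thesis using assms(2) by (simp add: mem_class_top)
next
  case (s s)
  then show ?thesis using assms(2) unfolding minA_def by simp
qed

lemma spine_class_cases:
  assumes "u \<in> spine" "P \<in> PT" "u \<in> P"
  shows "(\<exists>v'. consecA VT ET h v' u \<and> P = class_after v' u) \<or> (minA VT ET h u \<and> P = {u})"
  using assms(2)
proof (cases rule: partT_cases)
  case (w v' w')
  then have "u = w'" using assms(1,3) mem_class_after spine_not_leaf by blast
  then show ?thesis using w by blast
next
  case (p m)
  then show ?thesis using assms(1,3) spine_notin_class_top by blast
next
  case (s s)
  then show ?thesis using assms(3) by simp
qed

lemma leaf_class_cases:
  assumes "x \<in> L" "P \<in> PT" "x \<in> P" "ET x q"
  shows "(\<exists>w'. consecA VT ET h q w' \<and> P = class_after q w') \<or> (maxA VT ET h q \<and> P = class_top q)"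
  using assms(2)
proof (cases rule: partT_cases)
  case (w v' w')
  have "w' \<in> spine" using consecA_less[OF w(1)] by simp
  then have "x \<noteq> w'" using assms(1) spine_not_leaf by blast
  then have "ET v' x" using assms(3) w(2) mem_class_after by simp
  then have "v' = q" using leaf_neighbour_unique[OF assms(1)] assms(4) ET_sym by blast
  then show ?thesis using w by blast
next
  case (p m)
  have "ET m x" using assms(3) p(2) mem_class_top by simp
  then have "m = q" using leaf_neighbour_unique[OF assms(1)] assms(4) ET_sym by blast
  then show ?thesis using p by blast
next
  case (s s)
  then have "x \<in> spine" using assms(3) unfolding minA_def by simp
  then show ?thesis using assms(1) spine_not_leaf by blast
qed

lemma partT_unique:
  assumes P: "P \<in> PT" and Q: "Q \<in> PT" and uP: "u \<in> P" and uQ: "u \<in> Q"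
  shows "P = Q"
proof (cases "u \<in> spine")
  case True
  from spine_class_cases[OF True P uP] spine_class_cases[OF True Q uQ] show ?thesis
    using consecA_unique_left minA_not_consecA by metis
next
  case False
  then have uL: "u \<in> L" using partT_member_cases[OF P uP] by simp
  obtain q where "nbhd ET u = {q}" using leaf_nbhd_singleton[OF uL] by blast
  then have "ET u q" unfolding nbhd_def by auto
  from leaf_class_cases[OF uL P uP this] leaf_class_cases[OF uL Q uQ this] show ?thesis
    using consecA_unique_right maxA_not_consecA by metis
qed

lemma clsT_eqI: "P \<in> PT \<Longrightarrow> u \<in> P \<Longrightarrow> cls u = P"
  unfolding clsT_def using partT_unique by (intro the_equality) blast+

lemma partT_covers:
  assumes u: "u \<in> VT" shows "\<exists>P\<in>PT. u \<in> P"
proof (cases "u \<in> spine")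
  case True
  show ?thesis
  proof (cases "minA VT ET h u")
    case True
    then show ?thesis using min_singleton_in_partT by blast
  next
    case False
    then obtain b where "lessA VT ET h b u" using \<open>u \<in> spine\<close> unfolding minA_def by blast
    then have "b \<in> spine" "pos b < pos u" using lessA_iff by simp_all
    then obtain z where "consecA VT ET h z u" using spine_predecessor_exists[OF \<open>u \<in> spine\<close>] by blast
    then show ?thesis using class_after_in_partT mem_class_after by blast
  qed
next
  case False
  then have uL: "u \<in> L" using VT_spine_or_leaf u by blast
  obtain q where q: "nbhd ET u = {q}" using leaf_nbhd_singleton uL by blast
  then have "ET u q" unfolding nbhd_def by auto
  then have qs: "q \<in> spine" and qu: "ET q u" using leaf_neighbour_in_spine uL ET_sym by blast+
  show ?thesis
  proof (cases "maxA VT ET h q")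
    case True
    then show ?thesis using class_top_in_partT mem_class_top qu uL by blast
  next
    case False
    then obtain b where "lessA VT ET h q b" using qs unfolding maxA_def by blast
    then have "b \<in> spine" "pos q < pos b" using lessA_iff by simp_all
    then obtain z where "consecA VT ET h q z" using spine_successor_exists[OF qs] by blast
    then show ?thesis using class_after_in_partT mem_class_after qu uL by blast
  qed
qed

lemma clsT_props: "u \<in> VT \<Longrightarrow> u \<in> cls u \<and> cls u \<in> PT"
  using partT_covers clsT_eqI by metis

lemma spine_same_class_eq:
  assumes "P \<in> PT" "u \<in> P" "u' \<in> P" "u \<in> spine" "u' \<in> spine" shows "u = u'"
  using assms(1)
proof (cases rule: partT_cases)
  case (w v' w')
  then show ?thesis using assms(2-5) mem_class_after spine_not_leaf by metis
next
  case (p m) then show ?thesis using assms spine_notin_class_top by blast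
next
  case (s s) then show ?thesis using assms by simp
qed

definition anchor :: "'a \<Rightarrow> 'a" where
  "anchor u = (if u \<in> spine then u else (THE q. ET u q))"

lemma anchor_spine [simp]: "u \<in> spine \<Longrightarrow> anchor u = u"
  unfolding anchor_def by simp

lemma anchor_leaf:
  assumes "u \<in> VT" "u \<notin> spine"
  shows "ET u (anchor u) \<and> u \<in> L"
proof -
  have uL: "u \<in> L" using VT_spine_or_leaf assms by blast
  obtain q where q: "nbhd ET u = {q}" using leaf_nbhd_singleton uL by blast
  then have "ET u = (\<lambda>q'. q' = q)" unfolding nbhd_def by auto
  then have "anchor u = q" unfolding anchor_def using assms(2) by simp
  then show ?thesis using q uL unfolding nbhd_def by auto
qed

lemma anchor_in_spine: "u \<in> VT \<Longrightarrow> anchor u \<in> spine"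
  using anchor_leaf leaf_neighbour_in_spine by (cases "u \<in> spine") auto

lemma clsT_spine: "z \<in> spine \<Longrightarrow> z \<in> cls z \<and> cls z \<in> PT"
  using clsT_props spine_in_VT by blast

lemma class_top_eq: "nbhd ET m \<inter> L = class_top m" unfolding class_top_def by simp

lemma class_top_not_lessT:
  assumes "lessT VT ET h (class_top m) Q" "maxA VT ET h m" shows False
proof -
  from assms(1)[unfolded lessT_def class_top_eq] show False
  proof (elim disjE exE conjE)
    fix v' w' assume "lessA VT ET h v' w'" "class_top m = cls v'"
    then have "v' \<in> spine" using lessA_iff by simp
    then have "v' \<in> class_top m" using clsT_spine \<open>class_top m = cls v'\<close> by simp
    then show False using spine_notin_class_top \<open>v' \<in> spine\<close> by blast
  next
    fix s assume "minA VT ET h s" "class_top m = {s}"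
    then have "s \<in> spine" "s \<in> class_top m" unfolding minA_def by simp_all
    then show False using spine_notin_class_top by blast
  next
    fix m' assume M: "maxA VT ET h m'" "Q = class_top m'" "class_top m \<noteq> Q"
    have "m = m'" using maxA_unique[OF assms(2) M(1)] .
    then show False using M(2,3) by simp
  qed
qed

lemma anchor_of_class_member:
  assumes x: "x \<in> VT" and x1: "x1 \<in> spine" "x1 \<in> cls x"
  shows "x1 = anchor x \<or> consecA VT ET h (anchor x) x1"
proof (cases "x \<in> spine")
  case True
  then show ?thesis using spine_same_class_eq clsT_props[OF x] x1 by fastforce
next
  case False
  then have xl: "ET x (anchor x)" "x \<in> L" using anchor_leaf[OF x] by simp_all
  have xc: "cls x \<in> PT" "x \<in> cls x" using clsT_props[OF x] by simp_all
  from leaf_class_cases[OF xl(2) xc xl(1)] show ?thesis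
  proof (elim disjE exE conjE)
    fix w' assume "consecA VT ET h (anchor x) w'" "cls x = class_after (anchor x) w'"
    then show ?thesis using x1 mem_class_after spine_not_leaf by metis
  next
    assume "maxA VT ET h (anchor x)" "cls x = class_top (anchor x)"
    then show ?thesis using x1 spine_notin_class_top by metis
  qed
qed

lemma lessT_lower_bound_spine:
  assumes hvx: "lessT VT ET h (cls v) (cls x)" and hxw: "lessT VT ET h (cls x) (cls w)"
    and x: "x \<in> VT" and z: "z \<in> spine" and pz: "pos (anchor x) \<le> pos z"
  shows "leT VT ET h (cls v) (cls z)"
proof -
  have xc: "x \<in> cls x" "cls x \<in> PT" using clsT_props x by simp_all
  have zc: "z \<in> cls z" "cls z \<in> PT" using clsT_spine z by simp_all
  from hvx[unfolded lessT_def class_top_eq] show ?thesis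
  proof (elim disjE exE conjE)
    fix v1 x1 assume A: "lessA VT ET h v1 x1" "cls v = cls v1" "cls x = cls x1"
    have v1: "v1 \<in> spine" "x1 \<in> spine" "pos v1 < pos x1" using A(1) lessA_iff by simp_all
    have x1c: "x1 \<in> cls x" using A(3) clsT_spine v1(2) by simp
    from anchor_of_class_member[OF x v1(2) x1c] have "pos v1 \<le> pos (anchor x)"
    proof
      assume "consecA VT ET h (anchor x) x1"
      then show ?thesis using consecA_nothing_between[OF _ v1(1)] v1(3) by fastforce
    qed (use v1(3) in simp)
    then have "pos v1 \<le> pos z" using pz by simp
    then show ?thesis
    proof (cases "pos v1 = pos z")
      case True
      then have "v1 = z" using pos_inj v1(1) z by blast
      then show ?thesis unfolding leT_def using A(2) by simp
    next
      case False
      then have "lessA VT ET h v1 z" using lessA_iff v1(1) z \<open>pos v1 \<le> pos z\<close> by simp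
      then show ?thesis unfolding leT_def lessT_def using A(2) by blast
    qed
  next
    fix s assume S: "minA VT ET h s" "cls v = {s}"
    show ?thesis
    proof (cases "z = s")
      case True
      then have "cls z = {s}" using clsT_eqI min_singleton_in_partT S(1) by simp
      then show ?thesis unfolding leT_def using S(2) by simp
    next
      case False
      then have "cls z \<noteq> {s}" using zc(1) by auto
      then show ?thesis unfolding leT_def lessT_def using S zc(2) by blast
    qed
  next
    fix m assume "maxA VT ET h m" "cls x = class_top m"
    then show ?thesis using class_top_not_lessT hxw by metis
  qed
qed

lemma lessT_upper_bound_spine:
  assumes hyw: "lessT VT ET h (cls y) (cls w)"
    and y: "y \<in> VT" and z: "z \<in> spine" and pz: "pos z \<le> pos (anchor y)"
  shows "leT VT ET h (cls z) (cls w)"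
proof -
  have yc: "y \<in> cls y" "cls y \<in> PT" using clsT_props y by simp_all
  have zc: "z \<in> cls z" "cls z \<in> PT" using clsT_spine z by simp_all
  from hyw[unfolded lessT_def class_top_eq] show ?thesis
  proof (elim disjE exE conjE)
    fix y1 w1 assume A: "lessA VT ET h y1 w1" "cls y = cls y1" "cls w = cls w1"
    have y1: "y1 \<in> spine" "w1 \<in> spine" "pos y1 < pos w1" using A(1) lessA_iff by simp_all
    have y1c: "y1 \<in> cls y" using A(2) clsT_spine y1(1) by simp
    have "pos (anchor y) < pos w1"
      using anchor_of_class_member[OF y y1(1) y1c] consecA_less y1(3) by force
    then have "lessA VT ET h z w1" using lessA_iff z y1(2) pz by simp
    then show ?thesis unfolding leT_def lessT_def using A(3) by blast
  next
    fix s assume S: "minA VT ET h s" "cls y = {s}" "cls w \<in> PT" "cls w \<noteq> cls y"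
    have "y = s" using yc(1) S(2) by simp
    then have ys: "y \<in> spine" using S(1) unfolding minA_def by simp
    then have "anchor y = s" using anchor_spine[OF ys] \<open>y = s\<close> by simp
    have "z = s"
    proof (rule ccontr)
      assume "z \<noteq> s"
      then have "pos z \<noteq> pos s" using pos_inj z ys \<open>y = s\<close> by blast
      then have "lessA VT ET h z s" using lessA_iff z ys \<open>y = s\<close> pz \<open>anchor y = s\<close> by simp
      then show False using S(1) unfolding minA_def by blast
    qed
    then have "cls z = cls y" using \<open>y = s\<close> by simp
    then show ?thesis unfolding leT_def using hyw by simp
  next
    fix m assume M: "maxA VT ET h m" "cls w = class_top m"
    have "cls z \<noteq> class_top m" using zc(1) spine_notin_class_top z by blast
    then show ?thesis unfolding leT_def lessT_def class_top_eq using M zc(2) by blast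
  qed
qed

lemma arc_eventually_openin:
  assumes "openin X Ob" "J \<subseteq> {0..1}" "t \<in> J" "h t \<in> Ob" "\<And>s. s \<in> J \<Longrightarrow> h s \<in> Ob \<Longrightarrow> P s"
  shows "eventually P (at t within J)"
proof -
  obtain d where "d > 0" "\<forall>s\<in>{0..1}. \<bar>s - t\<bar> < d \<longrightarrow> h s \<in> Ob"
    using continuous_map_interval_nbhd[OF arc_continuous assms(1)] assms(2-4) by blast
  then show ?thesis using assms(2,5) by (intro eventually_within_realI) auto
qed

lemma end_on_arc_nbhd:
  assumes t: "\<alpha> < t" "t < \<beta>" "0 \<le> \<alpha>" "\<beta> \<le> 1" and ht: "h t = Inr \<omega>"
  obtains S where "finite S" "S \<subseteq> V"
    "\<And>z. z \<in> spine \<Longrightarrow> z \<in> end_comp V E S \<omega> \<Longrightarrow> \<alpha> < pos z \<and> pos z < \<beta>"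
proof -
  have sub: "{\<alpha><..<\<beta>} \<subseteq> {0..1}" using t(3,4) by auto
  then have "openin (top_of_set {0..1}) {\<alpha><..<\<beta>}"
    using openin_open_Int[OF open_greaterThanLessThan, of "{0..1}" \<alpha> \<beta>] by (simp add: Int_absorb1)
  then have "openin (subtopology X spine_arc) (h ` {\<alpha><..<\<beta>})"
    using homeomorphic_map_openness[OF arc_homeomorphic, of "{\<alpha><..<\<beta>}"] sub by simp
  then obtain U where U: "openin X U" "h ` {\<alpha><..<\<beta>} = U \<inter> spine_arc"
    unfolding openin_subtopology by blast
  have "h t \<in> h ` {\<alpha><..<\<beta>}" using t(1,2) by simp
  then have "Inr \<omega> \<in> U" using U(2) ht by simp
  then obtain S where S: "finite S" "S \<subseteq> V" "basic_end_nbhd V E S \<omega> \<subseteq> U"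
    using end_has_basic_nbhd[OF U(1)] by blast
  have "\<alpha> < pos z \<and> pos z < \<beta>" if z: "z \<in> spine" "z \<in> end_comp V E S \<omega>" for z
  proof -
    have "vpt z \<in> complex_pts V E" using vpt_in_complex_pts spine_subset_V z(1) by blast
    then have "Inl (vpt z) \<in> basic_end_nbhd V E S \<omega>"
      unfolding basic_end_nbhd_def using z(2) by auto
    then have "Inl (vpt z) \<in> U \<inter> spine_arc" using S(3) Inl_vpt_in_arc[OF z(1)] by blast
    then have "h (pos z) \<in> h ` {\<alpha><..<\<beta>}" using U(2) spine_pos_props(2)[OF z(1)] by simp
    then obtain s where s: "s \<in> {\<alpha><..<\<beta>}" "h (pos z) = h s" by blast
    then have "pos z = s"
      using arc_inj spine_pos_props(1)[OF z(1)] sub unfolding inj_on_def by blast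
    then show ?thesis using s(1) by simp
  qed
  then show ?thesis using that S(1,2) by blast
qed

lemma end_comp_leaf_anchor:
  assumes "finite S0" "S0 \<subseteq> V"
  obtains S where "finite S" "S \<subseteq> V" "S0 \<subseteq> S"
    "\<And>z. z \<in> end_comp V E S \<omega> \<Longrightarrow> z \<notin> spine \<Longrightarrow> anchor z \<in> end_comp V E S0 \<omega>"
proof -
  define S where "S = S0 \<union> \<Union>(nbhd ET ` S0)"
  have "finite (nbhd ET q)" if "q \<in> S0" for q
  proof -
    have "finite (nbhd E q)" using lf assms(2) that unfolding locally_finite_def by blast
    moreover have "nbhd ET q \<subseteq> nbhd E q" unfolding nbhd_def using ET_imp_E by blast
    ultimately show ?thesis by (rule rev_finite_subset)
  qed
  then have fin: "finite S" unfolding S_def using assms(1) by simp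
  have sub: "S \<subseteq> V" unfolding S_def nbhd_def using assms(2) ET_vertices VTV by auto
  have anchor: "anchor z \<in> end_comp V E S0 \<omega>"
    if z: "z \<in> end_comp V E S \<omega>" "z \<notin> spine" for z
  proof -
    have zS: "z \<in> VT" "z \<notin> S" using z(1) end_comp_subset VTV by blast+
    have za: "ET z (anchor z)" using anchor_leaf[OF zS(1) z(2)] by simp
    have "anchor z \<notin> S0"
    proof
      assume "anchor z \<in> S0"
      then have "z \<in> S" using ET_sym[OF za] unfolding S_def nbhd_def by blast
      then show False using zS(2) by blast
    qed
    moreover have "z \<in> end_comp V E S0 \<omega>"
      using z(1) end_comp_antimono[of S0 S \<omega>] unfolding S_def by blast
    ultimately show ?thesis using end_comp_adj_closed ET_imp_E[OF za] by blast
  qed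
  show ?thesis by (rule that[OF fin sub _ anchor]) (simp_all add: S_def)
qed

end

section \<open>Paths inside the interval\<close>

locale interval_paths = caterpillar V E VT ET h for V :: "'a set" and E VT ET h +
  fixes v w x y :: 'a
  assumes xV: "x \<in> V" and yV: "y \<in> V"
    and hvx: "lessT VT ET h (clsT VT ET h v) (clsT VT ET h x)"
    and hxw: "lessT VT ET h (clsT VT ET h x) (clsT VT ET h w)"
    and hvy: "lessT VT ET h (clsT VT ET h v) (clsT VT ET h y)"
    and hyw: "lessT VT ET h (clsT VT ET h y) (clsT VT ET h w)"
    and ord: "arc_pos h (anchor x) \<le> arc_pos h (anchor y)"
begin

abbreviation "I \<equiv> interval_I VT ET h v w"
abbreviation "pa \<equiv> pos (anchor x)"
abbreviation "pb \<equiv> pos (anchor y)"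
definition "reach = {z. path_in E I x z}"

lemma x_VT: "x \<in> VT" and y_VT: "y \<in> VT" using xV yV VTV by simp_all

lemma anchor_x_spine: "anchor x \<in> spine" and anchor_y_spine: "anchor y \<in> spine"
  using anchor_in_spine x_VT y_VT by simp_all

lemma pa_unit: "pa \<in> {0..1}" and pb_unit: "pb \<in> {0..1}"
  using spine_pos_props(1) anchor_x_spine anchor_y_spine by simp_all

lemma in_I:
  assumes "u \<in> VT" "z \<in> cls u" "leT VT ET h (cls v) (cls u)" "leT VT ET h (cls u) (cls w)"
  shows "z \<in> I"
proof -
  have "cls u \<in> {clsT VT ET h u | u. u \<in> VT \<and>
       leT VT ET h (clsT VT ET h v) (clsT VT ET h u) \<and> leT VT ET h (clsT VT ET h u) (clsT VT ET h w)}"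
    using assms(1,3,4) by blast
  then show ?thesis unfolding interval_I_def using assms(2) by (rule UnionI)
qed

lemma spine_in_I:
  assumes z: "z \<in> spine" and r: "pa \<le> pos z" "pos z \<le> pb" shows "z \<in> I"
proof -
  have "leT VT ET h (cls v) (cls z)" using lessT_lower_bound_spine[OF hvx hxw x_VT z r(1)] .
  moreover have "leT VT ET h (cls z) (cls w)" using lessT_upper_bound_spine[OF hyw y_VT z r(2)] .
  ultimately show ?thesis using in_I[of z z] clsT_spine[OF z] spine_in_VT[OF z] by blast
qed

lemma leaf_in_I:
  assumes l: "l \<in> L" and lq: "ET l q" and q: "q \<in> spine" and r: "pa \<le> pos q" "pos q < pb"
  shows "l \<in> I"
proof -
  obtain w' where w': "consecA VT ET h q w'"
    using spine_successor_exists[OF q anchor_y_spine r(2)] by blast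
  have ws: "w' \<in> spine" "pos q < pos w'" using consecA_less[OF w'(1)] by simp_all
  have "pos w' \<le> pb"
  proof (rule ccontr)
    assume "\<not> pos w' \<le> pb"
    then show False using consecA_nothing_between[OF w'(1) anchor_y_spine] r(2) by simp
  qed
  then have wI: "leT VT ET h (cls v) (cls w') \<and> leT VT ET h (cls w') (cls w)"
    using lessT_lower_bound_spine[OF hvx hxw x_VT ws(1)] lessT_upper_bound_spine[OF hyw y_VT ws(1)] r(1) ws(2) by simp
  have "l \<in> class_after q w'" unfolding mem_class_after using ET_sym[OF lq] l by simp
  moreover have "w' \<in> class_after q w'" unfolding mem_class_after by simp
  then have "cls w' = class_after q w'" using clsT_eqI[OF class_after_in_partT[OF w'(1)]] by simp
  ultimately show ?thesis using in_I[of w' l] wI ws(1) spine_in_VT by simp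
qed

lemma x_in_I: "x \<in> I"
  using in_I[of x x] clsT_props[OF x_VT] hvx hxw x_VT unfolding leT_def by simp
lemma y_in_I: "y \<in> I"
  using in_I[of y y] clsT_props[OF y_VT] hvy hyw y_VT unfolding leT_def by simp

lemma anchor_x_reach: "anchor x \<in> reach"
proof -
  have aI: "anchor x \<in> I" using spine_in_I[OF anchor_x_spine] ord by simp
  show ?thesis
  proof (cases "x \<in> spine")
    case True
    then show ?thesis unfolding reach_def using anchor_spine[OF True] path_in_refl x_in_I by simp
  next
    case False
    then have "ET x (anchor x)" using anchor_leaf[OF x_VT] by simp
    then have "E x (anchor x)" by (rule ET_imp_E)
    then show ?thesis unfolding reach_def using path_in_edge[of E x "anchor x" I] x_in_I aI by simp
  qed
qed

lemma reach_y_if_anchor: "anchor y \<in> reach \<Longrightarrow> y \<in> reach"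
proof -
  assume bK: "anchor y \<in> reach"
  show ?thesis
  proof (cases "y \<in> spine")
    case True
    then show ?thesis using bK anchor_spine[OF True] by simp
  next
    case False
    then have "ET y (anchor y)" using anchor_leaf[OF y_VT] by simp
    then have "E (anchor y) y" using ET_imp_E edge_sym by blast
    then show ?thesis using bK path_in_snoc[of E I x "anchor y" y] y_in_I unfolding reach_def by simp
  qed
qed

lemma reach_snoc: "c \<in> reach \<Longrightarrow> E c d \<Longrightarrow> d \<in> I \<Longrightarrow> d \<in> reach"
  unfolding reach_def using path_in_snoc[of E I x c d] by simp

lemma arc_Inl_supp_dichotomy:
  assumes t: "pa \<le> t" "t \<le> pb" and g: "h t = Inl g"
  shows "supp g \<subseteq> I \<and> (supp g \<subseteq> reach \<or> supp g \<inter> reach = {})"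
proof -
  have t01: "t \<in> {0..1}" using t pa_unit pb_unit by simp
  from t01 show ?thesis
  proof (cases rule: arc_point_cases)
    case (vert z)
    then have "g = vpt z" using g by simp
    moreover have "pos z = t" using h_eq_vertex_imp_pos(2)[OF t01 vert(2)] by simp
    ultimately show ?thesis using spine_in_I[OF vert(1)] t by auto
  next
    case (edge u z s)
    have Ez: "E u z" "u \<in> spine" "z \<in> spine" using spine_edge_props[OF edge(1)] by simp_all
    have uz: "u \<noteq> z" using edge_neq Ez(1) by blast
    have "g = ept u z s" using g edge(4) by simp
    then have supp_g: "supp g = {u, z}" using supp_ept[OF uz edge(2) edge(3)] by simp
    have r: "pa \<le> pos u \<and> pos u \<le> pb \<and> pa \<le> pos z \<and> pos z \<le> pb"
      using spine_edge_pos_between[OF anchor_x_spine anchor_y_spine t edge] .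
    have uI: "u \<in> I" "z \<in> I" using spine_in_I Ez r by simp_all
    have "u \<in> reach \<longleftrightarrow> z \<in> reach"
      using reach_snoc[of u z] reach_snoc[of z u] Ez(1) edge_sym[OF Ez(1)] uI by blast
    then show ?thesis using supp_g uI by auto
  next
    case (at_end \<omega>)
    then show ?thesis using g by simp
  qed
qed

lemma end_comp_reach_dichotomy:
  assumes w: "\<omega> \<in> ends V E" and S: "finite S" and CI: "end_comp V E S \<omega> \<subseteq> I"
  shows "end_comp V E S \<omega> \<subseteq> reach \<or> end_comp V E S \<omega> \<inter> reach = {}"
proof (cases "end_comp V E S \<omega> \<inter> reach = {}")
  case True then show ?thesis by simp
next
  case False
  then obtain c where c: "c \<in> end_comp V E S \<omega>" "c \<in> reach" by blast
  have "end_comp V E S \<omega> \<subseteq> reach"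
  proof
    fix d assume d: "d \<in> end_comp V E S \<omega>"
    have "path_in E I c d" using path_in_mono[OF path_in_end_comp[OF w S c(1) d] CI] .
    then show "d \<in> reach" using c(2) path_in_trans[of E I x c d] unfolding reach_def by simp
  qed
  then show ?thesis by simp
qed

lemma end_comp_disjoint_reach:
  assumes w: "\<omega> \<in> ends V E" and S: "finite S" and CK: "end_comp V E S \<omega> \<inter> reach = {}"
  shows "\<not> (\<exists>S'. finite S' \<and> S' \<subseteq> V \<and> end_comp V E S' \<omega> \<subseteq> reach)"
proof
  assume "\<exists>S'. finite S' \<and> S' \<subseteq> V \<and> end_comp V E S' \<omega> \<subseteq> reach"
  then obtain S' where S': "finite S'" "end_comp V E S' \<omega> \<subseteq> reach" by blast
  have fin: "finite (S \<union> S')" using S S'(1) by simp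
  obtain c where c: "c \<in> end_comp V E (S \<union> S') \<omega>" using end_comp_nonempty[OF w fin] by blast
  have "c \<in> end_comp V E S \<omega>" using c end_comp_antimono[of S "S \<union> S'"] by blast
  moreover have "c \<in> end_comp V E S' \<omega>" using c end_comp_antimono[of S' "S \<union> S'"] by blast
  ultimately show False using CK S'(2) by blast
qed

lemma end_on_arc_comp_in_I:
  assumes t: "pa \<le> t" "t \<le> pb" and ht: "h t = Inr \<omega>"
  obtains S where "finite S" "S \<subseteq> V" "end_comp V E S \<omega> \<subseteq> I"
proof -
  have "t \<noteq> pa" "t \<noteq> pb" using spine_pos_props(2) anchor_x_spine anchor_y_spine ht by auto
  then have "pa < t" "t < pb" using t by simp_all
  then obtain S0 where S0: "finite S0" "S0 \<subseteq> V"
    "\<And>z. z \<in> spine \<Longrightarrow> z \<in> end_comp V E S0 \<omega> \<Longrightarrow> pa < pos z \<and> pos z < pb"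
    using end_on_arc_nbhd[OF _ _ _ _ ht] pa_unit pb_unit by auto
  obtain S where S: "finite S" "S \<subseteq> V" "S0 \<subseteq> S"
    "\<And>z. z \<in> end_comp V E S \<omega> \<Longrightarrow> z \<notin> spine \<Longrightarrow> anchor z \<in> end_comp V E S0 \<omega>"
    using end_comp_leaf_anchor[OF S0(1,2)] by blast
  have "z \<in> I" if z: "z \<in> end_comp V E S \<omega>" for z
  proof (cases "z \<in> spine")
    case True
    moreover have "z \<in> end_comp V E S0 \<omega>" using z end_comp_antimono[OF S(3)] by blast
    ultimately show ?thesis using S0(3) spine_in_I by force
  next
    case False
    have zVT: "z \<in> VT" using z end_comp_subset VTV by blast
    have "ET z (anchor z)" "z \<in> L" using anchor_leaf[OF zVT False] by simp_all
    moreover have "pa < pos (anchor z) \<and> pos (anchor z) < pb"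
      using S0(3) S(4)[OF z False] anchor_in_spine[OF zVT] by blast
    ultimately show ?thesis using leaf_in_I anchor_in_spine[OF zVT] by force
  qed
  then show ?thesis using that S(1,2) by blast
qed

definition meets_reach :: "real \<Rightarrow> bool" where
  "meets_reach t = (case h t of Inl g \<Rightarrow> supp g \<inter> reach \<noteq> {}
          | Inr \<omega> \<Rightarrow> (\<exists>S. finite S \<and> S \<subseteq> V \<and> end_comp V E S \<omega> \<subseteq> reach))"

lemma interval_unit: "{pa..pb} \<subseteq> {0..1}"
  using pa_unit pb_unit by auto

lemma meets_reach_locally_const_vertex:
  assumes t: "t \<in> {pa..pb}" and ht: "h t = Inl (vpt z)" and z: "z \<in> spine"
  shows "eventually (\<lambda>s. meets_reach t = meets_reach s) (at t within {pa..pb})"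
proof -
  have vc: "vpt z \<in> complex_pts V E" using vpt_in_complex_pts spine_subset_V z by blast
  show ?thesis
  proof (rule arc_eventually_openin[OF _ interval_unit t])
    show "openin X (complex_ball V E (vpt z) (2/3))" using openin_complex_ball[OF vc] by simp
    show "h t \<in> complex_ball V E (vpt z) (2/3)" using center_in_complex_ball[OF vc] ht by simp
    fix s assume s: "s \<in> {pa..pb}" "h s \<in> complex_ball V E (vpt z) (2/3)"
    then obtain g where g: "h s = Inl g" unfolding complex_ball_def by blast
    have "z \<in> supp g" using supp_if_complex_ball[of g V E "vpt z" "2/3" z] s(2) g by (simp add: vpt_def)
    moreover have "supp g \<subseteq> reach \<or> supp g \<inter> reach = {}" using arc_Inl_supp_dichotomy[of s g] s(1) g by simp
    ultimately show "meets_reach t = meets_reach s" unfolding meets_reach_def using ht g by auto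
  qed
qed

lemma meets_reach_locally_const_edge:
  assumes t: "t \<in> {pa..pb}" and ht: "h t = Inl (ept u z r)" and uz: "spine_E VT ET u z" "0 < r" "r < 1"
  shows "eventually (\<lambda>s. meets_reach t = meets_reach s) (at t within {pa..pb})"
proof -
  have Euz: "E u z" using spine_edge_props[OF uz(1)] by simp
  then have "u \<noteq> z" using edge_neq by blast
  then have edge_supp: "meets_reach s \<longleftrightarrow> {u, z} \<inter> reach \<noteq> {}" if hs: "h s \<in> open_edge u z" for s
  proof -
    obtain r' where "h s = Inl (ept u z r')" "0 < r'" "r' < 1" using hs unfolding open_edge_def by blast
    then show ?thesis unfolding meets_reach_def using supp_ept[OF \<open>u \<noteq> z\<close>] by simp
  qed
  show ?thesis
  proof (rule arc_eventually_openin[OF openin_open_edge[OF Euz] interval_unit t])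
    show "h t \<in> open_edge u z" unfolding open_edge_def using ht uz by blast
    then show "meets_reach t = meets_reach s" if "h s \<in> open_edge u z" for s
      using edge_supp that by blast
  qed
qed

lemma meets_reach_in_basic_end_nbhd:
  assumes w: "\<omega> \<in> ends V E" and S: "finite S" "S \<subseteq> V" "end_comp V E S \<omega> \<subseteq> I"
    and s: "s \<in> {pa..pb}" "h s \<in> basic_end_nbhd V E S \<omega>"
  shows "meets_reach s \<longleftrightarrow> end_comp V E S \<omega> \<subseteq> reach"
proof (cases "h s")
  case (Inl g)
  then obtain c where c: "c \<in> supp g" "c \<in> end_comp V E S \<omega>"
    using s(2) unfolding basic_end_nbhd_def by auto
  have "supp g \<subseteq> reach \<or> supp g \<inter> reach = {}" using arc_Inl_supp_dichotomy[of s g] s(1) Inl by simp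
  with c end_comp_reach_dichotomy[OF w S(1,3)] show ?thesis
    unfolding meets_reach_def using Inl by auto
next
  case (Inr \<omega>')
  then have w': "\<omega>' \<in> ends V E" "end_comp V E S \<omega>' = end_comp V E S \<omega>"
    using s(2) unfolding basic_end_nbhd_def by auto
  show ?thesis
  proof
    assume "meets_reach s"
    then have "\<exists>S'. finite S' \<and> S' \<subseteq> V \<and> end_comp V E S' \<omega>' \<subseteq> reach"
      unfolding meets_reach_def using Inr by simp
    then show "end_comp V E S \<omega> \<subseteq> reach"
      using end_comp_disjoint_reach[OF w'(1) S(1)] end_comp_reach_dichotomy[OF w S(1,3)] w'(2) by auto
  next
    assume "end_comp V E S \<omega> \<subseteq> reach"
    then show "meets_reach s" unfolding meets_reach_def using Inr w'(2) S(1,2) by auto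
  qed
qed

lemma meets_reach_locally_const_end:
  assumes t: "t \<in> {pa..pb}" and ht: "h t = Inr \<omega>" and w: "\<omega> \<in> ends V E"
  shows "eventually (\<lambda>s. meets_reach t = meets_reach s) (at t within {pa..pb})"
proof -
  obtain S where S: "finite S" "S \<subseteq> V" "end_comp V E S \<omega> \<subseteq> I"
    using end_on_arc_comp_in_I[of t \<omega>] t ht by auto
  have ht': "h t \<in> basic_end_nbhd V E S \<omega>" using Inr_in_basic_end_nbhd[OF w] ht by simp
  show ?thesis
  proof (rule arc_eventually_openin[OF openin_basic_end_nbhd[OF S(1,2) w] interval_unit t ht'])
    fix s assume "s \<in> {pa..pb}" "h s \<in> basic_end_nbhd V E S \<omega>"
    then show "meets_reach t = meets_reach s"
      using meets_reach_in_basic_end_nbhd[OF w S] t ht' by blast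
  qed
qed

lemma meets_reach_locally_const:
  assumes t: "t \<in> {pa..pb}"
  shows "eventually (\<lambda>s. meets_reach t = meets_reach s) (at t within {pa..pb})"
proof -
  have "t \<in> {0..1}" using interval_unit t by blast
  then show ?thesis
  proof (cases rule: arc_point_cases)
    case (vert z)
    then show ?thesis using meets_reach_locally_const_vertex[OF t] by blast
  next
    case (edge u z r)
    then show ?thesis using meets_reach_locally_const_edge[OF t] by blast
  next
    case (at_end \<omega>)
    then show ?thesis using meets_reach_locally_const_end[OF t] by blast
  qed
qed

lemma path_x_y: "path_in E I x y"
proof -
  have J: "pa \<in> {pa..pb}" "pb \<in> {pa..pb}" using ord by simp_all
  have "\<forall>t\<in>{pa..pb}. eventually (\<lambda>s. meets_reach t = meets_reach s) (at t within {pa..pb})"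
    using meets_reach_locally_const by blast
  from connected_local_const[OF connected_Icc J this] have "meets_reach pa = meets_reach pb" .
  moreover have "meets_reach pa" "meets_reach pb = (anchor y \<in> reach)"
    unfolding meets_reach_def using spine_pos_props(2) anchor_x_spine anchor_y_spine anchor_x_reach by auto
  ultimately show ?thesis using reach_y_if_anchor unfolding reach_def by blast
qed

end

theorem lemma3p6:
  fixes V :: "'a set" and E :: "'a \<Rightarrow> 'a \<Rightarrow> bool"
    and VT :: "'a set" and ET :: "'a \<Rightarrow> 'a \<Rightarrow> bool"
    and h :: "real \<Rightarrow> 'a fpoint"
  assumes "simple_graph V E" and "locally_finite V E" and "connected_graph V E"
    and "top_caterpillar V E VT ET h" and "VT = V"
    and "v \<in> V" and "w \<in> V"
    and "leT VT ET h (clsT VT ET h v) (clsT VT ET h w)"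
    and "x \<in> V" and "y \<in> V"
    and "lessT VT ET h (clsT VT ET h v) (clsT VT ET h x)"
    and "lessT VT ET h (clsT VT ET h x) (clsT VT ET h w)"
    and "lessT VT ET h (clsT VT ET h v) (clsT VT ET h y)"
    and "lessT VT ET h (clsT VT ET h y) (clsT VT ET h w)"
  shows "path_in E (interval_I VT ET h v w) x y"
proof -
  interpret C: caterpillar V E VT ET h
    by (unfold_locales) (use assms(1,2,4,5) in simp_all)
  show ?thesis
  proof (cases "arc_pos h (C.anchor x) \<le> arc_pos h (C.anchor y)")
    case True
    interpret M: interval_paths V E VT ET h v w x y
      by (unfold_locales) (use assms(9-14) True in simp_all)
    show ?thesis using M.path_x_y .
  next
    case False
    interpret M: interval_paths V E VT ET h v w y x
      by (unfold_locales) (use assms(9-14) False in simp_all)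
    show ?thesis by (rule path_in_sym[OF C.edge_sym M.path_x_y])
  qed
qed

end
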